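(* Let $k\colon\mathbb{R}\setminus\{0\}\to[0,\infty)$ be increasing on $(-\infty,0)$ and decreasing on $(0,\infty)$, and such that $\frac{k(t)}{|t|}1_{\mathbb{R}\setminus\{0\}}(t)\,\mathrm{d}t$ is a Lévy measure. Let $a\ge0$. Then there exists a sequence $(k_n)$ of functions $k_n\colon\mathbb{R}\setminus\{0\}\to[0,\infty)$, each satisfying (a) $k_n$ is $C^2$ on $\mathbb{R}\setminus\{0\}$ and $(1+t^2)^m k_n^{(p)}(t)$ is bounded for all $m,p\in\{0,1,2\}$; (b) $k_n$ is increasing on $(-\infty,0)$ and decreasing on $(0,\infty)$; (c) $k_n$ is strictly positive on $\mathbb{R}\setminus\{0\}$; such that $$\frac{|t|k_n(t)}{1+t^2}\,\mathrm{d}t\ \longrightarrow\ a\delta_0+\frac{|t|k(t)}{1+t^2}\,\mathrm{d}t\quad\text{weakly as }n\to\infty.$$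
   Context: A Lévy measure on $\mathbb{R}$ is a Borel measure $\rho$ with $\rho(\{0\})=0$ and $\int_{\mathbb{R}}\min\{1,t^2\}\rho(\mathrm{d}t)<\infty$. Weak convergence of finite measures means convergence of integrals of every bounded continuous function. $\delta_0$ is the Dirac measure at $0$. *)

theory Defs
  imports "HOL-Probability.Probability"
begin

definition levy_measure :: "real measure \<Rightarrow> bool" where
  "levy_measure \<rho> \<longleftrightarrow> sets \<rho> = sets borel \<and> emeasure \<rho> {0} = 0 \<and>
     (\<integral>\<^sup>+ t. ennreal (min 1 (t\<^sup>2)) \<partial>\<rho>) < \<infinity>"

definition weak_conv_finite :: "(nat \<Rightarrow> real measure) \<Rightarrow> real measure \<Rightarrow> bool" where
  "weak_conv_finite Ms M \<longleftrightarrow>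
     (\<forall>n. finite_measure (Ms n) \<and> sets (Ms n) = sets borel) \<and>
     finite_measure M \<and> sets M = sets borel \<and>
     (\<forall>f :: real \<Rightarrow> real. continuous_on UNIV f \<and> bounded (range f) \<longrightarrow>
        (\<lambda>n. integral\<^sup>L (Ms n) f) \<longlonglongrightarrow> integral\<^sup>L M f)"

definition limit_measure :: "real \<Rightarrow> (real \<Rightarrow> real) \<Rightarrow> real measure" where
  "limit_measure a k = measure_of UNIV (sets borel)
     (\<lambda>A. ennreal a * indicator A 0 +
          (\<integral>\<^sup>+ t. ennreal (\<bar>t\<bar> * k t / (1 + t\<^sup>2)) * indicator A t \<partial>lborel))"

definition smooth_decay :: "(real \<Rightarrow> real) \<Rightarrow> bool" where
  "smooth_decay g \<longleftrightarrow>
     (\<forall>t. t \<noteq> 0 \<longrightarrow> g field_differentiable (at t) \<and> deriv g field_differentiable (at t)) \<and>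
     continuous_on (- {0}) (deriv (deriv g)) \<and>
     (\<forall>m \<in> {0..2::nat}. \<forall>p \<in> {0..2::nat}. \<exists>B. \<forall>t. t \<noteq> 0 \<longrightarrow>
        \<bar>(1 + t\<^sup>2) ^ m * (deriv ^^ p) g t\<bar> \<le> B)"

end

theory Submission
  imports Defs "HOL-Probability.Sinc_Integral"
begin

text \<open>On each half-line, \<open>k\<close> is truncated to \<open>[1/(n+1), n+1]\<close> and then averaged three times
  over windows of length \<open>1/(4(n+1))\<close>. Each average of a bounded decreasing function is decreasing
  and one order smoother, so the result is a decreasing \<open>C\<^sup>2\<close> function with compact support that
  lies below \<open>k\<close> and converges to \<open>k\<close> at its continuity points, i.e. almost everywhere. The mass
  \<open>a \<delta>\<^sub>0\<close> is produced by a smoothed indicator of \<open>[0, 1/(n+1))\<close>, normalised against the weight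
  \<open>|t|/(1+t\<^sup>2)\<close>, and adding \<open>(1+t\<^sup>2)\<^sup>-\<^sup>3/(n+1)\<close> makes the kernels strictly positive
  without changing the limit. Weak convergence then follows from dominated convergence for the
  first part and the approximate-identity property of the normalised bumps.\<close>

section \<open>Forward averages of decreasing functions\<close>

definition forward_average :: "real \<Rightarrow> (real \<Rightarrow> real) \<Rightarrow> real \<Rightarrow> real" where
  "forward_average h g t = integral {t..t+h} g / h"

definition difference_quotient :: "real \<Rightarrow> (real \<Rightarrow> real) \<Rightarrow> real \<Rightarrow> real" where
  "difference_quotient h g t = (g (t + h) - g t) / h"

definition triple_average :: "real \<Rightarrow> (real \<Rightarrow> real) \<Rightarrow> real \<Rightarrow> real" where
  "triple_average h g = forward_average h (forward_average h (forward_average h g))"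

lemma antimono_integrable_on:
  fixes g :: "real \<Rightarrow> real"
  assumes "antimono g"
  shows "g integrable_on {a..b}"
proof -
  have "mono_on {a..b} (\<lambda>x. - g x)"
    using assms by (auto simp: monotone_on_def)
  then show ?thesis
    using integrable_on_mono_on integrable_neg_iff by blast
qed

lemma forward_average_bounds:
  assumes "antimono g" "h > 0"
  shows "g (t + h) \<le> forward_average h g t" "forward_average h g t \<le> g t"
proof -
  have g: "g integrable_on {t..t+h}"
    using assms antimono_integrable_on by blast
  have "integral {t..t+h} g \<le> integral {t..t+h} (\<lambda>_. g t)"
    by (rule integral_le[OF g]) (use assms in \<open>auto simp: antimono_def\<close>)
  then show "forward_average h g t \<le> g t"
    using assms by (simp add: forward_average_def divide_le_eq mult.commute)
  have "integral {t..t+h} (\<lambda>_. g (t + h)) \<le> integral {t..t+h} g"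
    by (rule integral_le[OF _ g]) (use assms in \<open>auto simp: antimono_def\<close>)
  then show "g (t + h) \<le> forward_average h g t"
    using assms by (simp add: forward_average_def le_divide_eq mult.commute)
qed

lemma antimono_forward_average:
  assumes g: "antimono g" and h: "h > 0"
  shows "antimono (forward_average h g)"
proof
  fix x y :: real
  assume xy: "x \<le> y"
  show "forward_average h g y \<le> forward_average h g x"
  proof (cases "x + h \<le> y")
    case True
    have "forward_average h g y \<le> g y" by (rule forward_average_bounds(2)[OF g h])
    also have "\<dots> \<le> g (x + h)" using True g by (simp add: antimonoD)
    also have "\<dots> \<le> forward_average h g x" by (rule forward_average_bounds(1)[OF g h])
    finally show ?thesis .
  next
    case False
    \<comment> \<open>The windows overlap on \<open>[y, x+h]\<close>; compare the two leftover pieces of length \<open>y - x\<close>.\<close>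
    have int: "g integrable_on {u..v}" for u v
      using g antimono_integrable_on by blast
    have split_x: "integral {x..y} g + integral {y..x+h} g = integral {x..x+h} g"
      by (rule Henstock_Kurzweil_Integration.integral_combine) (use xy False int in auto)
    have split_y: "integral {y..x+h} g + integral {x+h..y+h} g = integral {y..y+h} g"
      by (rule Henstock_Kurzweil_Integration.integral_combine) (use xy False int in auto)
    have "integral {x..y} (\<lambda>_. g y) \<le> integral {x..y} g"
      by (rule integral_le[OF _ int]) (use g in \<open>auto simp: antimono_def\<close>)
    moreover have "integral {x+h..y+h} g \<le> integral {x+h..y+h} (\<lambda>_. g (x + h))"
      by (rule integral_le[OF int]) (use g in \<open>auto simp: antimono_def\<close>)
    moreover have "integral {x..y} (\<lambda>_. g y) = (y - x) * g y"
      "integral {x+h..y+h} (\<lambda>_. g (x + h)) = (y - x) * g (x + h)"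
      using xy by simp_all
    moreover have "(y - x) * g (x + h) \<le> (y - x) * g y"
      using xy False g by (intro mult_left_mono) (auto simp: antimono_def)
    ultimately have "integral {y..y+h} g \<le> integral {x..x+h} g"
      using split_x split_y by linarith
    then show ?thesis
      using h by (simp add: forward_average_def divide_right_mono)
  qed
qed

lemma forward_average_eq_integral_diff:
  fixes g :: "real \<Rightarrow> real"
  assumes "g integrable_on {a..b}" "a \<le> u" "h \<ge> 0" "u + h \<le> b"
  shows "forward_average h g u = (integral {a..u+h} g - integral {a..u} g) / h"
proof -
  have "g integrable_on {a..u+h}"
    by (rule integrable_on_subinterval[OF assms(1)]) (use assms in auto)
  then have "integral {a..u} g + integral {u..u+h} g = integral {a..u+h} g"
    by (intro Henstock_Kurzweil_Integration.integral_combine) (use assms in auto)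
  then show ?thesis
    by (simp add: forward_average_def)
qed

lemma continuous_on_forward_average:
  assumes g: "antimono g" and h: "h > 0"
  shows "continuous_on UNIV (forward_average h g)"
proof (rule continuous_at_imp_continuous_on, intro ballI)
  fix t :: real
  have int: "g integrable_on {t-1..t+h+1}"
    using g antimono_integrable_on by blast
  have prim: "continuous_on {t-1..t+h+1} (\<lambda>x. integral {t-1..x} g)"
    by (rule indefinite_integral_continuous_1[OF int])
  have "continuous_on {t-1..t+1} (\<lambda>u. (integral {t-1..u+h} g - integral {t-1..u} g) / h)"
    by (intro continuous_intros continuous_on_compose2[OF prim] continuous_on_subset[OF prim])
      (use h in auto)
  then have "continuous_on {t-1..t+1} (forward_average h g)"
    by (rule continuous_on_eq) (use h forward_average_eq_integral_diff[OF int] in auto)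
  then show "isCont (forward_average h g) t"
    by (rule continuous_on_interior) auto
qed

lemma forward_average_has_real_derivative:
  assumes g: "continuous_on UNIV g" and h: "h > 0"
  shows "(forward_average h g has_real_derivative difference_quotient h g t) (at t)"
proof -
  define a where "a = t - 1"
  define b where "b = t + h + 1"
  have int: "g integrable_on {a..b}"
    using g integrable_continuous_real continuous_on_subset by blast
  have prim: "((\<lambda>x. integral {a..x} g) has_real_derivative g u) (at u)" if "u \<in> {a<..<b}" for u
  proof -
    have "((\<lambda>x. integral {a..x} g) has_real_derivative g u) (at u within {a..b})"
      by (rule integral_has_real_derivative) (use g that continuous_on_subset in auto)
    then have "((\<lambda>x. integral {a..x} g) has_real_derivative g u) (at u within {a<..<b})"
      by (rule has_field_derivative_subset) auto
    then show ?thesis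
      using that at_within_open[of u "{a<..<b}"] by simp
  qed
  have "((\<lambda>x. integral {a..x} g) has_real_derivative g (t + h)) (at (t + h))"
    using prim h by (simp add: a_def b_def)
  moreover have "((\<lambda>u. u + h) has_real_derivative 1) (at t)"
    by (auto intro!: derivative_eq_intros)
  ultimately have shifted: "((\<lambda>u. integral {a..u+h} g) has_real_derivative g (t + h)) (at t)"
    using DERIV_chain2[where g="\<lambda>u. u + h" and x=t and s=UNIV and Db=1] by fastforce
  have "((\<lambda>x. integral {a..x} g) has_real_derivative g t) (at t)"
    using prim h by (simp add: a_def b_def)
  then have "((\<lambda>u. (integral {a..u+h} g - integral {a..u} g) / h)
      has_real_derivative (g (t + h) - g t) / h) (at t)"
    using h by (auto intro!: derivative_eq_intros shifted)
  then show ?thesis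
    unfolding difference_quotient_def
    by (rule has_field_derivative_transform_within_open[where S="{a<..<b-h}"])
      (use h forward_average_eq_integral_diff[OF int] in \<open>auto simp: a_def b_def\<close>)
qed

lemma forward_average_eq_0:
  assumes "\<And>s. s \<ge> L \<Longrightarrow> g s = 0" "t \<ge> L"
  shows "forward_average h g t = 0"
proof -
  have "integral {t..t+h} g = integral {t..t+h} (\<lambda>_. 0 :: real)"
    by (rule integral_cong) (use assms in auto)
  then show ?thesis
    by (simp add: forward_average_def)
qed

lemma abs_forward_average_le:
  assumes "antimono g" "h > 0" "\<And>s. \<bar>g s\<bar> \<le> C"
  shows "\<bar>forward_average h g t\<bar> \<le> C"
  using forward_average_bounds[OF assms(1,2), of t] assms(3)[of t] assms(3)[of "t + h"] by linarith

lemma abs_difference_quotient_le: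
  assumes "\<And>s. \<bar>g s\<bar> \<le> C" "h > 0"
  shows "\<bar>difference_quotient h g t\<bar> \<le> 2 * C / h"
proof -
  have "\<bar>g (t + h) - g t\<bar> \<le> 2 * C"
    using assms(1)[of t] assms(1)[of "t + h"] by linarith
  then show ?thesis
    using assms(2) by (simp add: difference_quotient_def abs_divide divide_right_mono)
qed

lemma difference_quotient_eq_0:
  "(\<And>s. s \<ge> L \<Longrightarrow> g s = 0) \<Longrightarrow> t \<ge> L \<Longrightarrow> h > 0 \<Longrightarrow> difference_quotient h g t = 0"
  by (simp add: difference_quotient_def)

lemma continuous_on_difference_quotient:
  assumes "continuous_on UNIV g"
  shows "continuous_on UNIV (difference_quotient h g)"
proof -
  have "continuous_on UNIV (\<lambda>s. s + h)"
    by (intro continuous_intros)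
  moreover have "continuous_on ((\<lambda>s. s + h) ` UNIV) g"
    using assms by (rule continuous_on_subset) simp
  ultimately have "continuous_on UNIV (g \<circ> (\<lambda>s. s + h))"
    by (rule continuous_on_compose)
  then have "continuous_on UNIV (\<lambda>s. g (s + h) - g s)"
    using assms by (intro continuous_on_diff) (simp_all add: o_def)
  then show ?thesis
    unfolding difference_quotient_def[abs_def] divide_inverse by (intro continuous_on_mult_right)
qed

lemma difference_quotient_has_real_derivative:
  assumes "\<And>t. (g has_real_derivative g' t) (at t)"
  shows "(difference_quotient h g has_real_derivative difference_quotient h g' t) (at t)"
proof -
  have "((\<lambda>u. u + h) has_real_derivative 1) (at t)"
    by (auto intro!: derivative_eq_intros)
  from DERIV_chain2[where f=g and x=t and s=UNIV and Db=1, OF assms this]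
  have "((\<lambda>u. g (u + h)) has_real_derivative g' (t + h)) (at t)"
    by simp
  from DERIV_diff[OF this assms]
  show ?thesis
    unfolding difference_quotient_def[abs_def] by (rule DERIV_cdivide)
qed

lemma triple_average_bounds:
  assumes g: "antimono g" and h: "h > 0"
  shows "g (t + 3 * h) \<le> triple_average h g t" "triple_average h g t \<le> g t"
proof -
  have a1: "antimono (forward_average h g)"
    by (rule antimono_forward_average[OF g h])
  have a2: "antimono (forward_average h (forward_average h g))"
    by (rule antimono_forward_average[OF a1 h])
  show "g (t + 3 * h) \<le> triple_average h g t"
    using forward_average_bounds(1)[OF g h, of "t + h + h"] forward_average_bounds(1)[OF a1 h, of "t + h"]
      forward_average_bounds(1)[OF a2 h, of t]
    by (simp add: triple_average_def algebra_simps)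
  show "triple_average h g t \<le> g t"
    using forward_average_bounds(2)[OF g h, of t] forward_average_bounds(2)[OF a1 h, of t]
      forward_average_bounds(2)[OF a2 h, of t]
    by (simp add: triple_average_def)
qed

lemma antimono_triple_average:
  assumes "antimono g" "h > 0"
  shows "antimono (triple_average h g)"
  unfolding triple_average_def using assms by (intro antimono_forward_average)

lemma continuous_on_triple_average:
  assumes "antimono g" "h > 0"
  shows "continuous_on UNIV (triple_average h g)"
  unfolding triple_average_def using assms by (intro continuous_on_forward_average antimono_forward_average)

lemma triple_average_eq_0:
  assumes "\<And>s. s \<ge> L \<Longrightarrow> g s = 0" "t \<ge> L"
  shows "triple_average h g t = 0"
  unfolding triple_average_def using assms by (intro forward_average_eq_0[of L]) auto

section \<open>Twice differentiable functions with rapid decay\<close>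

definition rapid_decay_pos :: "(real \<Rightarrow> real) \<Rightarrow> bool" where
  "rapid_decay_pos F \<longleftrightarrow> (\<exists>B. \<forall>t>0. (1 + t\<^sup>2)\<^sup>2 * \<bar>F t\<bar> \<le> B)"

definition C2_rapid_decay_pos :: "(real \<Rightarrow> real) \<Rightarrow> bool" where
  "C2_rapid_decay_pos F \<longleftrightarrow> (\<exists>F' F''. (\<forall>t. (F has_real_derivative F' t) (at t)) \<and>
     (\<forall>t. (F' has_real_derivative F'' t) (at t)) \<and> continuous_on UNIV F'' \<and>
     rapid_decay_pos F \<and> rapid_decay_pos F' \<and> rapid_decay_pos F'')"

lemma rapid_decay_posI:
  assumes "\<And>t. t > 0 \<Longrightarrow> \<bar>F t\<bar> \<le> C / (1 + t\<^sup>2)\<^sup>2"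
  shows "rapid_decay_pos F"
  unfolding rapid_decay_pos_def
proof (intro exI allI impI)
  fix t :: real
  assume "t > 0"
  moreover have "0 < (1 + t\<^sup>2)\<^sup>2"
    by (intro zero_less_power add_pos_nonneg) auto
  ultimately show "(1 + t\<^sup>2)\<^sup>2 * \<bar>F t\<bar> \<le> C"
    using assms[of t] by (simp add: le_divide_eq mult.commute)
qed

lemma rapid_decay_pos_add:
  assumes "rapid_decay_pos F" "rapid_decay_pos G"
  shows "rapid_decay_pos (\<lambda>t. F t + G t)"
proof -
  obtain B B' where B: "\<And>t. t > 0 \<Longrightarrow> (1 + t\<^sup>2)\<^sup>2 * \<bar>F t\<bar> \<le> B"
    and B': "\<And>t. t > 0 \<Longrightarrow> (1 + t\<^sup>2)\<^sup>2 * \<bar>G t\<bar> \<le> B'"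
    using assms by (auto simp: rapid_decay_pos_def)
  have "(1 + t\<^sup>2)\<^sup>2 * \<bar>F t + G t\<bar> \<le> B + B'" if "t > 0" for t
  proof -
    have "(1 + t\<^sup>2)\<^sup>2 * \<bar>F t + G t\<bar> \<le> (1 + t\<^sup>2)\<^sup>2 * (\<bar>F t\<bar> + \<bar>G t\<bar>)"
      by (intro mult_left_mono abs_triangle_ineq) simp
    also have "\<dots> \<le> B + B'"
      using B[OF that] B'[OF that] by (simp add: distrib_left)
    finally show ?thesis .
  qed
  then show ?thesis
    unfolding rapid_decay_pos_def by blast
qed

lemma rapid_decay_pos_cmult:
  assumes "rapid_decay_pos F"
  shows "rapid_decay_pos (\<lambda>t. c * F t)"
proof -
  obtain B where B: "\<And>t. t > 0 \<Longrightarrow> (1 + t\<^sup>2)\<^sup>2 * \<bar>F t\<bar> \<le> B"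
    using assms by (auto simp: rapid_decay_pos_def)
  have "(1 + t\<^sup>2)\<^sup>2 * \<bar>c * F t\<bar> \<le> \<bar>c\<bar> * B" if "t > 0" for t
  proof -
    have "(1 + t\<^sup>2)\<^sup>2 * \<bar>c * F t\<bar> = \<bar>c\<bar> * ((1 + t\<^sup>2)\<^sup>2 * \<bar>F t\<bar>)"
      by (simp add: abs_mult)
    also have "\<dots> \<le> \<bar>c\<bar> * B"
      using B[OF that] by (intro mult_left_mono) auto
    finally show ?thesis .
  qed
  then show ?thesis
    unfolding rapid_decay_pos_def by blast
qed

lemma rapid_decay_pos_if_vanishing:
  assumes "\<And>t. \<bar>F t\<bar> \<le> C" "\<And>t. t \<ge> L \<Longrightarrow> F t = 0"
  shows "rapid_decay_pos F"
  unfolding rapid_decay_pos_def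
proof (intro exI allI impI)
  fix t :: real
  assume t: "t > 0"
  show "(1 + t\<^sup>2)\<^sup>2 * \<bar>F t\<bar> \<le> (1 + L\<^sup>2)\<^sup>2 * C"
  proof (cases "t < L")
    case True
    then have "t\<^sup>2 \<le> L\<^sup>2"
      using t by (intro power_mono) auto
    then have "(1 + t\<^sup>2)\<^sup>2 \<le> (1 + L\<^sup>2)\<^sup>2"
      by (intro power_mono) auto
    then show ?thesis
      using assms(1)[of t] by (intro mult_mono) auto
  next
    case False
    then show ?thesis
      using assms(1)[of t] assms(2)[of t] by auto
  qed
qed

lemma C2_rapid_decay_pos_add:
  assumes "C2_rapid_decay_pos F" "C2_rapid_decay_pos G"
  shows "C2_rapid_decay_pos (\<lambda>t. F t + G t)"
proof -
  obtain F' F'' G' G'' where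
    "\<forall>t. (F has_real_derivative F' t) (at t)" "\<forall>t. (F' has_real_derivative F'' t) (at t)"
    "continuous_on UNIV F''" "rapid_decay_pos F" "rapid_decay_pos F'" "rapid_decay_pos F''"
    "\<forall>t. (G has_real_derivative G' t) (at t)" "\<forall>t. (G' has_real_derivative G'' t) (at t)"
    "continuous_on UNIV G''" "rapid_decay_pos G" "rapid_decay_pos G'" "rapid_decay_pos G''"
    using assms unfolding C2_rapid_decay_pos_def by blast
  then show ?thesis
    unfolding C2_rapid_decay_pos_def
    by (intro exI[of _ "\<lambda>t. F' t + G' t"] exI[of _ "\<lambda>t. F'' t + G'' t"])
      (auto intro!: DERIV_add continuous_intros rapid_decay_pos_add)
qed

lemma C2_rapid_decay_pos_cmult:
  assumes "C2_rapid_decay_pos F"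
  shows "C2_rapid_decay_pos (\<lambda>t. c * F t)"
proof -
  obtain F' F'' where
    "\<forall>t. (F has_real_derivative F' t) (at t)" "\<forall>t. (F' has_real_derivative F'' t) (at t)"
    "continuous_on UNIV F''" "rapid_decay_pos F" "rapid_decay_pos F'" "rapid_decay_pos F''"
    using assms unfolding C2_rapid_decay_pos_def by blast
  then show ?thesis
    unfolding C2_rapid_decay_pos_def
    by (intro exI[of _ "\<lambda>t. c * F' t"] exI[of _ "\<lambda>t. c * F'' t"])
      (auto intro!: DERIV_cmult continuous_intros rapid_decay_pos_cmult)
qed

lemma abs_le_one_plus_square: "\<bar>t\<bar> \<le> 1 + (t :: real)\<^sup>2"
proof -
  have "0 \<le> (\<bar>t\<bar> - 1)\<^sup>2"
    by simp
  then show ?thesis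
    by (simp add: power2_diff)
qed

lemma inverse_cube_derivative_bound:
  fixes u t :: real
  assumes u: "1 \<le> u" and t: "\<bar>t\<bar> \<le> u"
  shows "\<bar>-3 / u ^ 4 * (2 * t)\<bar> \<le> 6 / u\<^sup>2"
proof -
  have "\<bar>-3 / u ^ 4 * (2 * t)\<bar> = 6 * \<bar>t\<bar> / u ^ 4"
    using u by (simp add: abs_mult)
  also have "\<dots> \<le> 6 * u / u ^ 4"
    using u t by (intro divide_right_mono) auto
  also have "\<dots> = 6 / u ^ 3"
    using u by (simp add: power_eq_if)
  also have "\<dots> \<le> 6 / u\<^sup>2"
    using u by (intro divide_left_mono power_increasing) auto
  finally show ?thesis .
qed

lemma inverse_cube_second_derivative_bound:
  fixes u t :: real
  assumes u: "1 \<le> u" and t: "t\<^sup>2 \<le> u"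
  shows "\<bar>12 / u ^ 5 * (2 * t) * (2 * t) + 2 * (-3 / u ^ 4)\<bar> \<le> 54 / u\<^sup>2"
proof -
  have "\<bar>12 / u ^ 5 * (2 * t) * (2 * t) + 2 * (-3 / u ^ 4)\<bar> \<le> 48 * t\<^sup>2 / u ^ 5 + 6 / u ^ 4"
    using u by (simp add: abs_le_iff power2_eq_square)
  also have "\<dots> \<le> 48 * u / u ^ 5 + 6 / u ^ 4"
    using u t by (intro add_right_mono divide_right_mono) auto
  also have "\<dots> = 54 / u ^ 4"
    using u by (simp add: power_eq_if field_simps)
  also have "\<dots> \<le> 54 / u\<^sup>2"
    using u by (intro divide_left_mono power_increasing) auto
  finally show ?thesis .
qed

lemma C2_rapid_decay_pos_inverse_cube: "C2_rapid_decay_pos (\<lambda>t. 1 / (1 + t\<^sup>2) ^ 3)"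
proof -
  \<comment> \<open>Chain rule through \<open>u = 1 + t\<^sup>2\<close>; the bounds use \<open>\<bar>t\<bar> \<le> u\<close> and \<open>t\<^sup>2 \<le> u\<close>.\<close>
  define F' where "F' t = -3 / (1 + t\<^sup>2) ^ 4 * (2 * t)" for t :: real
  define F'' where "F'' t = 12 / (1 + t\<^sup>2) ^ 5 * (2 * t) * (2 * t) + 2 * (-3 / (1 + t\<^sup>2) ^ 4)"
    for t :: real
  have u_ge: "1 \<le> 1 + t\<^sup>2" "\<bar>t\<bar> \<le> 1 + t\<^sup>2" "t\<^sup>2 \<le> 1 + t\<^sup>2" for t :: real
    by (simp_all add: abs_le_one_plus_square)
  have du: "((\<lambda>t. 1 + t\<^sup>2) has_real_derivative 2 * t) (at t)" for t :: real
    by (auto intro!: derivative_eq_intros)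
  have d1: "((\<lambda>u. 1 / u ^ 3) has_real_derivative -3 / u ^ 4) (at u)" if "u \<ge> 1" for u :: real
  proof -
    have "u \<noteq> 0"
      using that by auto
    then show ?thesis
      by (auto intro!: derivative_eq_intros simp: field_simps power_eq_if)
  qed
  have d2: "((\<lambda>u. -3 / u ^ 4) has_real_derivative 12 / u ^ 5) (at u)" if "u \<ge> 1" for u :: real
  proof -
    have "u \<noteq> 0"
      using that by auto
    then show ?thesis
      by (auto intro!: derivative_eq_intros simp: field_simps power_eq_if)
  qed
  have "((\<lambda>t. 1 / (1 + t\<^sup>2) ^ 3) has_real_derivative F' t) (at t)" for t
    unfolding F'_def
    by (rule DERIV_chain2[where g="\<lambda>t. 1 + t\<^sup>2" and x=t, OF d1[OF u_ge(1)] du])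
  moreover have "(F' has_real_derivative F'' t) (at t)" for t
    unfolding F'_def[abs_def] F''_def
    by (intro DERIV_mult DERIV_chain2[where g="\<lambda>t. 1 + t\<^sup>2" and x=t, OF d2[OF u_ge(1)] du])
      (auto intro!: derivative_eq_intros)
  moreover have "continuous_on UNIV F''"
    unfolding F''_def[abs_def] using u_ge(1)
    by (intro continuous_intros) (metis not_one_le_zero power_eq_0_iff)+
  moreover have "rapid_decay_pos (\<lambda>t. 1 / (1 + t\<^sup>2) ^ 3)"
  proof (rule rapid_decay_posI[of _ 1])
    fix t :: real
    have "(1 + t\<^sup>2)\<^sup>2 \<le> (1 + t\<^sup>2) ^ 3"
      using u_ge(1)[of t] by (intro power_increasing) auto
    then show "\<bar>1 / (1 + t\<^sup>2) ^ 3\<bar> \<le> 1 / (1 + t\<^sup>2)\<^sup>2"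
      by (simp add: divide_left_mono add_pos_nonneg)
  qed
  moreover have "rapid_decay_pos F'"
    unfolding F'_def using inverse_cube_derivative_bound[OF u_ge(1,2)] by (rule rapid_decay_posI)
  moreover have "rapid_decay_pos F''"
    unfolding F''_def using inverse_cube_second_derivative_bound[OF u_ge(1,3)] by (rule rapid_decay_posI)
  ultimately show ?thesis
    unfolding C2_rapid_decay_pos_def by (intro exI[of _ F'] exI[of _ F'']) simp
qed

lemma rapid_decay_pos_difference_quotient:
  assumes "\<And>s. \<bar>g s\<bar> \<le> C" "\<And>s. s \<ge> L \<Longrightarrow> g s = 0" "h > 0"
  shows "rapid_decay_pos (difference_quotient h g)"
proof (rule rapid_decay_pos_if_vanishing)
  show "\<bar>difference_quotient h g t\<bar> \<le> 2 * C / h" for t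
    using assms(1,3) by (rule abs_difference_quotient_le)
  show "difference_quotient h g t = 0" if "t \<ge> L" for t
    using assms(2) that assms(3) by (rule difference_quotient_eq_0)
qed

lemma C2_rapid_decay_pos_triple_average:
  assumes g: "antimono g" and h: "h > 0"
    and bounded: "\<And>s. \<bar>g s\<bar> \<le> C" and vanishing: "\<And>s. s \<ge> L \<Longrightarrow> g s = 0"
  shows "C2_rapid_decay_pos (triple_average h g)"
proof -
  define A1 where "A1 = forward_average h g"
  define A2 where "A2 = forward_average h A1"
  have mono1: "antimono A1"
    unfolding A1_def by (rule antimono_forward_average[OF g h])
  have mono2: "antimono A2"
    unfolding A2_def by (rule antimono_forward_average[OF mono1 h])
  have bound1: "\<bar>A1 t\<bar> \<le> C" for t
    unfolding A1_def by (rule abs_forward_average_le[OF g h bounded])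
  have bound2: "\<bar>A2 t\<bar> \<le> C" for t
    unfolding A2_def by (rule abs_forward_average_le[OF mono1 h bound1])
  have vanish1: "A1 t = 0" if "t \<ge> L" for t
    unfolding A1_def using vanishing that by (rule forward_average_eq_0)
  have vanish2: "A2 t = 0" if "t \<ge> L" for t
    unfolding A2_def using vanish1 that by (rule forward_average_eq_0)
  have cont1: "continuous_on UNIV A1"
    unfolding A1_def by (rule continuous_on_forward_average[OF g h])
  have deriv2: "(A2 has_real_derivative difference_quotient h A1 t) (at t)" for t
    unfolding A2_def by (rule forward_average_has_real_derivative[OF cont1 h])
  then have cont2: "continuous_on UNIV A2"
    by (meson DERIV_isCont continuous_at_imp_continuous_on)
  have "(triple_average h g has_real_derivative difference_quotient h A2 t) (at t)" for t
    unfolding triple_average_def A1_def[symmetric] A2_def[symmetric]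
    by (rule forward_average_has_real_derivative[OF cont2 h])
  moreover have "(difference_quotient h A2 has_real_derivative
      difference_quotient h (difference_quotient h A1) t) (at t)" for t
    using deriv2 by (rule difference_quotient_has_real_derivative)
  moreover have "continuous_on UNIV (difference_quotient h (difference_quotient h A1))"
    using cont1 by (intro continuous_on_difference_quotient)
  moreover have "rapid_decay_pos (triple_average h g)"
    unfolding triple_average_def A1_def[symmetric] A2_def[symmetric]
    using abs_forward_average_le[OF mono2 h bound2] forward_average_eq_0[OF vanish2]
    by (rule rapid_decay_pos_if_vanishing)
  moreover have "rapid_decay_pos (difference_quotient h A2)"
    using bound2 vanish2 h by (rule rapid_decay_pos_difference_quotient)
  moreover have "rapid_decay_pos (difference_quotient h (difference_quotient h A1))"
  proof (rule rapid_decay_pos_difference_quotient[OF _ _ h])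
    show "\<bar>difference_quotient h A1 t\<bar> \<le> 2 * C / h" for t
      using bound1 h by (rule abs_difference_quotient_le)
    show "difference_quotient h A1 t = 0" if "t \<ge> L" for t
      using vanish1 that h by (rule difference_quotient_eq_0)
  qed
  ultimately show ?thesis
    unfolding C2_rapid_decay_pos_def
    by (intro exI[of _ "difference_quotient h A2"] exI[of _ "difference_quotient h (difference_quotient h A1)"])
      simp
qed

section \<open>Two-sided kernels\<close>

text \<open>A kernel on \<open>\<real> - {0}\<close> given by a profile \<open>F\<close> on \<open>t > 0\<close> and the mirrored profile \<open>G\<close> of its
  restriction to \<open>t < 0\<close>; the value at \<open>0\<close> plays no role.\<close>

definition two_sided :: "(real \<Rightarrow> real) \<Rightarrow> (real \<Rightarrow> real) \<Rightarrow> real \<Rightarrow> real" where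
  "two_sided F G t = (if 0 < t then F t else G (- t))"

lemma two_sided_weighted_bound:
  assumes "rapid_decay_pos F" "rapid_decay_pos G"
  shows "\<exists>B. \<forall>t. t \<noteq> 0 \<longrightarrow> (1 + t\<^sup>2)\<^sup>2 * \<bar>two_sided F G t\<bar> \<le> B"
proof -
  obtain B B' where B: "\<And>t. t > 0 \<Longrightarrow> (1 + t\<^sup>2)\<^sup>2 * \<bar>F t\<bar> \<le> B"
    and B': "\<And>t. t > 0 \<Longrightarrow> (1 + t\<^sup>2)\<^sup>2 * \<bar>G t\<bar> \<le> B'"
    using assms by (auto simp: rapid_decay_pos_def)
  have "(1 + t\<^sup>2)\<^sup>2 * \<bar>two_sided F G t\<bar> \<le> max B B'" if "t \<noteq> 0" for t
    using B[of t] B'[of "- t"] that by (cases "t > 0") (auto simp: two_sided_def)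
  then show ?thesis
    by blast
qed

lemma has_real_derivative_two_sided:
  assumes "t \<noteq> 0" "\<And>t. (F has_real_derivative F' t) (at t)" "\<And>t. (G has_real_derivative G' t) (at t)"
  shows "(two_sided F G has_real_derivative two_sided F' (\<lambda>s. - G' s) t) (at t)"
proof (cases "t > 0")
  case True
  have "(F has_real_derivative two_sided F' (\<lambda>s. - G' s) t) (at t)"
    using assms(2)[of t] True by (simp add: two_sided_def)
  then show ?thesis
    by (rule has_field_derivative_transform_within_open[where S="{0<..}"])
      (use True in \<open>auto simp: two_sided_def\<close>)
next
  case False
  then have "t < 0"
    using assms(1) by simp
  have "((\<lambda>x. G (- x)) has_real_derivative two_sided F' (\<lambda>s. - G' s) t) (at t)"
    using DERIV_mirror[of G "G' (- t)" t] assms(3) \<open>t < 0\<close> by (simp add: two_sided_def)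
  then show ?thesis
    by (rule has_field_derivative_transform_within_open[where S="{..<0}"])
      (use \<open>t < 0\<close> in \<open>auto simp: two_sided_def\<close>)
qed

lemma continuous_on_two_sided:
  assumes "continuous_on UNIV F" "continuous_on UNIV G"
  shows "continuous_on (- {0}) (two_sided F G)"
proof -
  have "continuous_on {0<..} (two_sided F G)"
    by (rule continuous_on_eq[OF continuous_on_subset[OF assms(1)]]) (auto simp: two_sided_def)
  moreover have "continuous_on {..<0} (two_sided F G)"
    by (rule continuous_on_eq[of _ "\<lambda>t. G (- t)"])
      (auto intro!: continuous_on_compose2[OF assms(2)] continuous_intros simp: two_sided_def)
  ultimately have "continuous_on ({0<..} \<union> {..<0}) (two_sided F G)"
    by (intro continuous_on_open_Un) auto
  moreover have "{0<..} \<union> {..<0} = - {0 :: real}"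
    by auto
  ultimately show ?thesis
    by simp
qed

lemma smooth_decayI:
  fixes g :: "real \<Rightarrow> real"
  assumes deriv1: "\<And>t. t \<noteq> 0 \<Longrightarrow> (g has_real_derivative g' t) (at t)"
    and deriv2: "\<And>t. t \<noteq> 0 \<Longrightarrow> (g' has_real_derivative g'' t) (at t)"
    and cont: "continuous_on (- {0}) g''"
    and bounds: "\<And>p. p \<in> {0..2} \<Longrightarrow> \<exists>B. \<forall>t. t \<noteq> 0 \<longrightarrow> (1 + t\<^sup>2)\<^sup>2 * \<bar>([g, g', g''] ! p) t\<bar> \<le> B"
  shows "smooth_decay g"
proof -
  have d1: "deriv g t = g' t" if "t \<noteq> 0" for t
    using deriv1[OF that] by (rule DERIV_imp_deriv)
  have dd: "(deriv g has_real_derivative g'' t) (at t)" if "t \<noteq> 0" for t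
    by (rule has_field_derivative_transform_within_open[OF deriv2[OF that], where S="- {0}"])
      (use that d1 in auto)
  have d2: "deriv (deriv g) t = g'' t" if "t \<noteq> 0" for t
    using dd[OF that] by (rule DERIV_imp_deriv)
  have iterate: "(deriv ^^ p) g t = ([g, g', g''] ! p) t" if p: "p \<in> {0..2}" and t: "t \<noteq> 0" for p t
  proof -
    consider "p = 0" | "p = 1" | "p = 2"
      using p by fastforce
    then show ?thesis
      by cases (use d1 d2 t in \<open>simp_all add: numeral_2_eq_2\<close>)
  qed
  have "\<exists>B. \<forall>t. t \<noteq> 0 \<longrightarrow> \<bar>(1 + t\<^sup>2) ^ m * (deriv ^^ p) g t\<bar> \<le> B"
    if m: "m \<in> {0..2}" and p: "p \<in> {0..2}" for m p
  proof -
    obtain B where B: "\<And>t. t \<noteq> 0 \<Longrightarrow> (1 + t\<^sup>2)\<^sup>2 * \<bar>([g, g', g''] ! p) t\<bar> \<le> B"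
      using bounds[OF p] by blast
    have "\<bar>(1 + t\<^sup>2) ^ m * (deriv ^^ p) g t\<bar> \<le> B" if "t \<noteq> 0" for t
    proof -
      have "(1 + t\<^sup>2) ^ m \<le> (1 + t\<^sup>2)\<^sup>2"
        using m by (intro power_increasing) auto
      then have "\<bar>(1 + t\<^sup>2) ^ m * (deriv ^^ p) g t\<bar> \<le> (1 + t\<^sup>2)\<^sup>2 * \<bar>(deriv ^^ p) g t\<bar>"
        by (simp add: abs_mult mult_right_mono)
      then show ?thesis
        using B[OF that] iterate[OF p that] by simp
    qed
    then show ?thesis
      by blast
  qed
  moreover have "continuous_on (- {0}) (deriv (deriv g))"
    by (rule continuous_on_eq[OF cont]) (use d2 in auto)
  moreover have "g field_differentiable (at t)" "deriv g field_differentiable (at t)" if "t \<noteq> 0" for t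
    using deriv1[OF that] dd[OF that] field_differentiable_def by blast+
  ultimately show ?thesis
    unfolding smooth_decay_def by blast
qed

lemma smooth_decay_two_sided:
  assumes "C2_rapid_decay_pos F" "C2_rapid_decay_pos G"
  shows "smooth_decay (two_sided F G)"
proof -
  obtain F' F'' where F: "\<And>t. (F has_real_derivative F' t) (at t)"
    "\<And>t. (F' has_real_derivative F'' t) (at t)" "continuous_on UNIV F''"
    "rapid_decay_pos F" "rapid_decay_pos F'" "rapid_decay_pos F''"
    using assms(1) unfolding C2_rapid_decay_pos_def by blast
  obtain G' G'' where G: "\<And>t. (G has_real_derivative G' t) (at t)"
    "\<And>t. (G' has_real_derivative G'' t) (at t)" "continuous_on UNIV G''"
    "rapid_decay_pos G" "rapid_decay_pos G'" "rapid_decay_pos G''"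
    using assms(2) unfolding C2_rapid_decay_pos_def by blast
  have neg: "((\<lambda>s. - G' s) has_real_derivative - G'' t) (at t)" for t
    using G(2) by (rule DERIV_minus)
  have "(two_sided F' (\<lambda>s. - G' s) has_real_derivative two_sided F'' G'' t) (at t)" if "t \<noteq> 0" for t
    using has_real_derivative_two_sided[OF that F(2) neg] by simp
  moreover have "\<exists>B. \<forall>t. t \<noteq> 0 \<longrightarrow>
      (1 + t\<^sup>2)\<^sup>2 * \<bar>([two_sided F G, two_sided F' (\<lambda>s. - G' s), two_sided F'' G''] ! p) t\<bar> \<le> B"
    if p: "p \<in> {0..2}" for p
  proof -
    have "rapid_decay_pos (\<lambda>s. - G' s)"
      using rapid_decay_pos_cmult[OF G(5), of "-1"] by simp
    note bounds = two_sided_weighted_bound[OF F(4) G(4)] two_sided_weighted_bound[OF F(5) this]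
      two_sided_weighted_bound[OF F(6) G(6)]
    consider "p = 0" | "p = 1" | "p = 2"
      using p by fastforce
    then show ?thesis
      by cases (use bounds in \<open>simp_all add: numeral_2_eq_2\<close>)
  qed
  ultimately show ?thesis
    using has_real_derivative_two_sided[OF _ F(1) G(1)] continuous_on_two_sided[OF F(3) G(3)]
    by (intro smooth_decayI)
qed

section \<open>Smooth decreasing approximations\<close>

definition truncation :: "real \<Rightarrow> real \<Rightarrow> (real \<Rightarrow> real) \<Rightarrow> real \<Rightarrow> real" where
  "truncation c M \<phi> s = \<phi> (max s c) * indicator {..<M} s"

lemma truncation_eq_0: "s \<ge> M \<Longrightarrow> truncation c M \<phi> s = 0"
  by (simp add: truncation_def)

lemma truncation_eq_self: "c \<le> s \<Longrightarrow> s < M \<Longrightarrow> truncation c M \<phi> s = \<phi> s"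
  by (simp add: truncation_def)

context
  fixes \<phi> :: "real \<Rightarrow> real" and c M :: real
  assumes anti: "antimono_on {0<..} \<phi>" and nonneg: "\<And>s. s > 0 \<Longrightarrow> 0 \<le> \<phi> s" and c: "c > 0"
begin

lemma antimono_truncation: "antimono (truncation c M \<phi>)"
proof
  fix x y :: real
  assume xy: "x \<le> y"
  show "truncation c M \<phi> y \<le> truncation c M \<phi> x"
  proof (cases "y < M")
    case True
    have "\<phi> (max y c) \<le> \<phi> (max x c)"
      using xy c by (intro monotone_onD[OF anti]) auto
    then show ?thesis
      using True xy by (simp add: truncation_def)
  next
    case False
    then show ?thesis
      using nonneg[of "max x c"] c by (simp add: truncation_def)
  qed
qed

lemma truncation_nonneg: "0 \<le> truncation c M \<phi> s"
  using nonneg[of "max s c"] c by (simp add: truncation_def)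

lemma truncation_le: "truncation c M \<phi> s \<le> \<phi> c"
  using monotone_onD[OF anti, of c "max s c"] nonneg[of c] c
  by (cases "s < M") (auto simp: truncation_def)

lemma truncation_le_self: "s > 0 \<Longrightarrow> truncation c M \<phi> s \<le> \<phi> s"
  using monotone_onD[OF anti, of s "max s c"] nonneg[of s]
  by (cases "s < M") (auto simp: truncation_def)

lemma abs_truncation_le: "\<bar>truncation c M \<phi> s\<bar> \<le> \<phi> c"
  using truncation_nonneg truncation_le by simp

end

definition approx_profile :: "(real \<Rightarrow> real) \<Rightarrow> nat \<Rightarrow> real \<Rightarrow> real" where
  "approx_profile \<phi> n =
     triple_average (1 / (4 * (real n + 1))) (truncation (1 / (real n + 1)) (real n + 1) \<phi>)"

context
  fixes \<phi> :: "real \<Rightarrow> real"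
  assumes anti: "antimono_on {0<..} \<phi>" and nonneg: "\<And>s. s > 0 \<Longrightarrow> 0 \<le> \<phi> s"
begin

lemma antimono_approx_profile: "antimono (approx_profile \<phi> n)"
  unfolding approx_profile_def using anti nonneg
  by (intro antimono_triple_average antimono_truncation) auto

lemma approx_profile_bounds:
  "truncation (1 / (real n + 1)) (real n + 1) \<phi> (t + 3 / (4 * (real n + 1))) \<le> approx_profile \<phi> n t"
  "approx_profile \<phi> n t \<le> truncation (1 / (real n + 1)) (real n + 1) \<phi> t"
  using triple_average_bounds[OF antimono_truncation[OF anti nonneg], of "1 / (real n + 1)" "1 / (4 * (real n + 1))"]
  by (auto simp: approx_profile_def)

lemma approx_profile_nonneg: "0 \<le> approx_profile \<phi> n t"
proof -
  have "0 < 1 / (real n + 1)"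
    by simp
  from truncation_nonneg[OF anti nonneg this]
  show ?thesis
    using approx_profile_bounds(1)[of n t] by (meson order_trans)
qed

lemma approx_profile_le: "t > 0 \<Longrightarrow> approx_profile \<phi> n t \<le> \<phi> t"
proof -
  assume "t > 0"
  have "0 < 1 / (real n + 1)"
    by simp
  from truncation_le_self[OF anti nonneg this \<open>t > 0\<close>]
  show ?thesis
    using approx_profile_bounds(2)[of n t] by (meson order_trans)
qed

lemma continuous_on_approx_profile: "continuous_on UNIV (approx_profile \<phi> n)"
  unfolding approx_profile_def using anti nonneg
  by (intro continuous_on_triple_average antimono_truncation) auto

lemma C2_rapid_decay_pos_approx_profile: "C2_rapid_decay_pos (approx_profile \<phi> n)"
proof -
  have c: "0 < 1 / (real n + 1)"
    by simp
  show ?thesis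
    unfolding approx_profile_def
    by (rule C2_rapid_decay_pos_triple_average[OF antimono_truncation[OF anti nonneg c] _
          abs_truncation_le[OF anti nonneg c] truncation_eq_0]) (use anti nonneg in auto)
qed

lemma approx_profile_tendsto:
  assumes t: "t > 0" and cont: "isCont \<phi> t"
  shows "(\<lambda>n. approx_profile \<phi> n t) \<longlonglongrightarrow> \<phi> t"
proof (rule tendsto_sandwich)
  define shift where "shift n = 3 / (4 * (real n + 1))" for n
  show "\<forall>\<^sub>F n in sequentially. approx_profile \<phi> n t \<le> \<phi> t"
    using approx_profile_le[OF t] by simp
  obtain N :: nat where N: "real N \<ge> 1 / t" "real N \<ge> t"
    using real_arch_simple[of "max (1 / t) t"] by auto
  have "\<phi> (t + shift n) \<le> approx_profile \<phi> n t" if "n \<ge> N" for n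
  proof -
    have n: "real N \<le> real n"
      using that by simp
    have "1 / t \<le> real n + 1"
      using N(1) n by linarith
    then have "inverse (real n + 1) \<le> inverse (1 / t)"
      using t by (intro le_imp_inverse_le) auto
    moreover have "0 \<le> shift n"
      by (simp add: shift_def)
    ultimately have "1 / (real n + 1) \<le> t + shift n"
      using t by (simp add: inverse_eq_divide)
    moreover have "shift n \<le> 3 / 4"
      by (simp add: shift_def divide_le_eq)
    then have "t + shift n < real n + 1"
      using N(2) n by linarith
    ultimately show ?thesis
      using approx_profile_bounds(1)[of n t] truncation_eq_self[of "1 / (real n + 1)" "t + shift n"]
      by (simp add: shift_def)
  qed
  then show "\<forall>\<^sub>F n in sequentially. \<phi> (t + shift n) \<le> approx_profile \<phi> n t"
    unfolding eventually_sequentially by blast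
  have "(\<lambda>n. 3 / 4 * inverse (real (Suc n))) \<longlonglongrightarrow> 3 / 4 * 0"
    by (intro tendsto_mult tendsto_const LIMSEQ_inverse_real_of_nat)
  then have "(\<lambda>n. t + shift n) \<longlonglongrightarrow> t + 0"
    by (intro tendsto_add tendsto_const) (simp add: shift_def[abs_def] field_simps)
  then show "(\<lambda>n. \<phi> (t + shift n)) \<longlonglongrightarrow> \<phi> t"
    using isCont_tendsto_compose[OF cont] by simp
qed simp

end

definition bump_profile :: "nat \<Rightarrow> real \<Rightarrow> real" where
  "bump_profile n = triple_average (1 / (4 * (real n + 1))) (indicator {..<1 / (real n + 1)})"

lemma antimono_indicator_lessThan: "antimono (indicator {..<c} :: real \<Rightarrow> real)"
  by (rule antimonoI) (auto simp: indicator_def)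

lemma bump_profile_bounds:
  "indicator {..<1 / (real n + 1)} (t + 3 / (4 * (real n + 1))) \<le> bump_profile n t"
  "bump_profile n t \<le> indicator {..<1 / (real n + 1)} t"
  using triple_average_bounds[OF antimono_indicator_lessThan, of "1 / (4 * (real n + 1))"]
  by (auto simp: bump_profile_def)

lemma bump_profile_nonneg: "0 \<le> bump_profile n t"
  using bump_profile_bounds(1)[of n t] by (meson indicator_pos_le order_trans)

lemma bump_profile_le_1: "bump_profile n t \<le> 1"
  using bump_profile_bounds(2)[of n t] by (meson indicator_le_1 order_trans)

lemma bump_profile_eq_0: "t \<ge> 1 / (real n + 1) \<Longrightarrow> bump_profile n t = 0"
  unfolding bump_profile_def by (rule triple_average_eq_0) auto

lemma bump_profile_eq_1:
  assumes "t < 1 / (4 * (real n + 1))"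
  shows "bump_profile n t = 1"
proof -
  have "t + 3 / (4 * (real n + 1)) < 1 / (4 * (real n + 1)) + 3 / (4 * (real n + 1))"
    using assms by (rule add_strict_right_mono)
  also have "\<dots> = 1 / (real n + 1)"
    by (simp add: field_simps)
  finally have "t + 3 / (4 * (real n + 1)) < 1 / (real n + 1)" .
  then show ?thesis
    using bump_profile_bounds(1)[of n t] bump_profile_le_1[of n t] by simp
qed

lemma antimono_bump_profile: "antimono (bump_profile n)"
  unfolding bump_profile_def by (intro antimono_triple_average antimono_indicator_lessThan) simp

lemma continuous_on_bump_profile: "continuous_on UNIV (bump_profile n)"
  unfolding bump_profile_def by (intro continuous_on_triple_average antimono_indicator_lessThan) simp

lemma C2_rapid_decay_pos_bump_profile: "C2_rapid_decay_pos (bump_profile n)"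
  unfolding bump_profile_def
  by (rule C2_rapid_decay_pos_triple_average[OF antimono_indicator_lessThan, where C=1 and L="1 / (real n + 1)"])
    (auto simp: indicator_def)

section \<open>The limit measure\<close>

definition dirac_plus_density :: "real \<Rightarrow> (real \<Rightarrow> real) \<Rightarrow> real measure" where
  "dirac_plus_density a \<psi> = measure_of UNIV (sets borel)
     (\<lambda>A. ennreal a * indicator A 0 + (\<integral>\<^sup>+t. ennreal (\<psi> t) * indicator A t \<partial>lborel))"

lemma sets_dirac_plus_density [simp, measurable_cong]: "sets (dirac_plus_density a \<psi>) = sets borel"
  unfolding dirac_plus_density_def by (metis sets.sets_measure_of_eq space_borel)

lemma space_dirac_plus_density [simp]: "space (dirac_plus_density a \<psi>) = UNIV"
  unfolding dirac_plus_density_def by (metis sets.space_measure_of_eq space_borel)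

lemma emeasure_dirac_plus_density:
  assumes [measurable]: "\<psi> \<in> borel_measurable borel" and A: "A \<in> sets borel"
  shows "emeasure (dirac_plus_density a \<psi>) A
    = ennreal a * emeasure (return borel 0) A + emeasure (density lborel \<psi>) A"
proof -
  define \<mu> where "\<mu> A = ennreal a * emeasure (return borel 0) A + emeasure (density lborel \<psi>) A"
    for A :: "real set"
  have \<mu>_eq: "ennreal a * indicator A 0 + (\<integral>\<^sup>+t. ennreal (\<psi> t) * indicator A t \<partial>lborel) = \<mu> A"
    if "A \<in> sets borel" for A
    using that by (simp add: \<mu>_def emeasure_density)
  have "countably_additive (sets borel) \<mu>"
  proof (rule countably_additiveI)
    fix A :: "nat \<Rightarrow> real set"
    assume A: "range A \<subseteq> sets borel" "disjoint_family A"
    have "(\<Sum>i. \<mu> (A i)) = (\<Sum>i. ennreal a * emeasure (return borel 0) (A i)) + (\<Sum>i. emeasure (density lborel \<psi>) (A i))"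
      unfolding \<mu>_def by (rule suminf_add[symmetric]) auto
    also have "\<dots> = ennreal a * (\<Sum>i. emeasure (return borel 0) (A i)) + (\<Sum>i. emeasure (density lborel \<psi>) (A i))"
      by (simp only: ennreal_suminf_cmult)
    also have "\<dots> = \<mu> (\<Union>i. A i)"
      unfolding \<mu>_def using A by (subst (1 2) suminf_emeasure) auto
    finally show "(\<Sum>i. \<mu> (A i)) = \<mu> (\<Union>i. A i)" .
  qed
  moreover have "positive (sets borel) \<mu>"
    by (simp add: positive_def \<mu>_def)
  ultimately have "emeasure (measure_of UNIV (sets borel) \<mu>) A = \<mu> A"
    using A by (intro emeasure_measure_of_sigma) (auto simp: sets.sigma_algebra_axioms[of borel, simplified])
  moreover have "measure_of UNIV (sets borel) \<mu> = dirac_plus_density a \<psi>"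
    unfolding dirac_plus_density_def
    by (intro measure_of_eq) (simp_all add: \<mu>_eq sets.sigma_sets_eq[of borel, simplified])
  ultimately show ?thesis
    by (simp add: \<mu>_def)
qed

lemma nn_integral_dirac_plus_density:
  assumes [measurable]: "\<psi> \<in> borel_measurable borel" and g: "g \<in> borel_measurable borel"
  shows "(\<integral>\<^sup>+x. g x \<partial>dirac_plus_density a \<psi>) = ennreal a * g 0 + (\<integral>\<^sup>+x. ennreal (\<psi> x) * g x \<partial>lborel)"
proof -
  let ?M = "dirac_plus_density a \<psi>" and ?D = "return borel (0 :: real)" and ?L = "density lborel \<psi>"
  have meas: "f \<in> borel_measurable ?M" "f \<in> borel_measurable ?D" "f \<in> borel_measurable ?L"
    if "f \<in> borel_measurable borel" for f :: "real \<Rightarrow> ennreal"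
    using that by (simp_all add: measurable_cong_sets[OF sets_dirac_plus_density refl])
  have "(\<integral>\<^sup>+x. g x \<partial>?M) = ennreal a * (\<integral>\<^sup>+x. g x \<partial>?D) + (\<integral>\<^sup>+x. g x \<partial>?L)"
    using g
  proof (induction rule: borel_measurable_induct)
    case (cong f g)
    then have "f = g"
      by auto
    with cong show ?case
      by simp
  next
    case (set A)
    then show ?case
      by (simp add: emeasure_dirac_plus_density)
  next
    case (mult u c)
    then show ?case
      by (simp add: nn_integral_cmult meas algebra_simps)
  next
    case (add u v)
    then show ?case
      by (simp add: nn_integral_add meas algebra_simps)
  next
    case (seq U)
    have inc: "incseq U"
      using seq by blast
    have hyp: "(\<integral>\<^sup>+x. U i x \<partial>?M) = ennreal a * (\<integral>\<^sup>+x. U i x \<partial>?D) + (\<integral>\<^sup>+x. U i x \<partial>?L)" for i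
      using seq by blast
    have U: "U i \<in> borel_measurable ?M" "U i \<in> borel_measurable ?D" "U i \<in> borel_measurable ?L" for i
      using seq(1) meas by blast+
    have mono: "incseq (\<lambda>i. ennreal a * integral\<^sup>N ?D (U i))" "incseq (\<lambda>i. integral\<^sup>N ?L (U i))"
      using inc by (auto intro!: nn_integral_mono mult_left_mono simp: incseq_def le_fun_def)
    have "(\<integral>\<^sup>+x. (SUP i. U i) x \<partial>?M) = (SUP i. integral\<^sup>N ?M (U i))"
      using nn_integral_monotone_convergence_SUP[OF inc U(1)] by (simp add: SUP_apply image_comp)
    also have "\<dots> = (SUP i. ennreal a * integral\<^sup>N ?D (U i) + integral\<^sup>N ?L (U i))"
      using hyp by simp
    also have "\<dots> = ennreal a * (SUP i. integral\<^sup>N ?D (U i)) + (SUP i. integral\<^sup>N ?L (U i))"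
      by (simp add: ennreal_SUP_add[OF mono] SUP_mult_left_ennreal)
    also have "\<dots> = ennreal a * (\<integral>\<^sup>+x. (SUP i. U i) x \<partial>?D) + (\<integral>\<^sup>+x. (SUP i. U i) x \<partial>?L)"
      using nn_integral_monotone_convergence_SUP[OF inc U(2)]
        nn_integral_monotone_convergence_SUP[OF inc U(3)] by (simp add: SUP_apply image_comp)
    finally show ?case .
  qed
  then show ?thesis
    using g by (simp add: nn_integral_return nn_integral_density)
qed

lemma finite_measure_dirac_plus_density:
  assumes [measurable]: "\<psi> \<in> borel_measurable borel" and "\<And>t. 0 \<le> \<psi> t" "integrable lborel \<psi>"
  shows "finite_measure (dirac_plus_density a \<psi>)"
proof (rule finite_measureI)
  have "(\<integral>\<^sup>+x. ennreal (\<psi> x) \<partial>lborel) < \<infinity>"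
    using assms by (simp add: nn_integral_eq_integral)
  then show "emeasure (dirac_plus_density a \<psi>) (space (dirac_plus_density a \<psi>)) \<noteq> \<infinity>"
    by (simp add: emeasure_dirac_plus_density emeasure_density ennreal_mult_less_top)
qed

lemma integrable_mult_bounded:
  fixes g f :: "'a \<Rightarrow> real"
  assumes "integrable M g" "f \<in> borel_measurable M" "\<And>x. \<bar>f x\<bar> \<le> B"
  shows "integrable M (\<lambda>x. g x * f x)"
proof (rule Bochner_Integration.integrable_bound[OF integrable_mult_right[OF integrable_abs[OF assms(1)], of B]])
  show "(\<lambda>x. g x * f x) \<in> borel_measurable M"
    using assms borel_measurable_integrable by measurable
  have "\<bar>g x * f x\<bar> \<le> \<bar>B * \<bar>g x\<bar>\<bar>" for x
  proof -
    have "\<bar>f x\<bar> * \<bar>g x\<bar> \<le> \<bar>B\<bar> * \<bar>g x\<bar>"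
      using assms(3)[of x] by (intro mult_right_mono) auto
    then show ?thesis
      by (simp add: abs_mult mult.commute)
  qed
  then show "AE x in M. norm (g x * f x) \<le> norm (B * \<bar>g x\<bar>)"
    by simp
qed

lemma integral_dirac_plus_density_nonneg:
  assumes [measurable]: "\<psi> \<in> borel_measurable borel" and \<psi>: "\<And>t. 0 \<le> \<psi> t" "integrable lborel \<psi>"
    and a: "0 \<le> a" and g[measurable]: "g \<in> borel_measurable borel"
    and g_nonneg: "\<And>t. 0 \<le> g t" and g_bounded: "\<And>t. \<bar>g t\<bar> \<le> C"
  shows "integral\<^sup>L (dirac_plus_density a \<psi>) g = a * g 0 + integral\<^sup>L lborel (\<lambda>t. \<psi> t * g t)"
proof -
  have int_M: "integrable (dirac_plus_density a \<psi>) g"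
    using finite_measure_dirac_plus_density \<psi> g_bounded
    by (intro finite_measure.integrable_const_bound[where B=C]) auto
  have int_L: "integrable lborel (\<lambda>t. \<psi> t * g t)"
    using \<psi> g_bounded by (intro integrable_mult_bounded) auto
  have "ennreal (integral\<^sup>L (dirac_plus_density a \<psi>) g) = (\<integral>\<^sup>+x. g x \<partial>dirac_plus_density a \<psi>)"
    using nn_integral_eq_integral[OF int_M] g_nonneg by simp
  also have "\<dots> = ennreal a * ennreal (g 0) + (\<integral>\<^sup>+x. ennreal (\<psi> x * g x) \<partial>lborel)"
    using \<psi> g_nonneg by (simp add: nn_integral_dirac_plus_density ennreal_mult)
  also have "\<dots> = ennreal (a * g 0 + integral\<^sup>L lborel (\<lambda>t. \<psi> t * g t))"
    using nn_integral_eq_integral[OF int_L] \<psi> g_nonneg a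
    by (simp add: ennreal_mult ennreal_plus integral_nonneg)
  finally show ?thesis
    using \<psi> g_nonneg a by (subst (asm) ennreal_inj) (auto intro!: integral_nonneg)
qed

lemma integral_dirac_plus_density:
  assumes [measurable]: "\<psi> \<in> borel_measurable borel" and \<psi>: "\<And>t. 0 \<le> \<psi> t" "integrable lborel \<psi>"
    and a: "0 \<le> a" and f[measurable]: "f \<in> borel_measurable borel" and bounded: "\<And>t. \<bar>f t\<bar> \<le> B"
  shows "integral\<^sup>L (dirac_plus_density a \<psi>) f = a * f 0 + integral\<^sup>L lborel (\<lambda>t. \<psi> t * f t)"
proof -
  \<comment> \<open>Apply the nonnegative case to \<open>f + B\<close> and to \<open>B\<close>, then subtract.\<close>
  have finite: "finite_measure (dirac_plus_density a \<psi>)"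
    using finite_measure_dirac_plus_density \<psi> by simp
  have B: "0 \<le> B"
    using bounded[of 0] by linarith
  have shifted: "0 \<le> f t + B" "\<bar>f t + B\<bar> \<le> 2 * B" for t
    using bounded[of t] by (auto simp: abs_le_iff)
  have "integrable (dirac_plus_density a \<psi>) (\<lambda>t. f t + B)"
    using shifted by (intro finite_measure.integrable_const_bound[OF finite, where B="2 * B"] AE_I2) auto
  from Bochner_Integration.integral_diff[OF this finite_measure.integrable_const[OF finite, of B]]
  have "integral\<^sup>L (dirac_plus_density a \<psi>) f
      = integral\<^sup>L (dirac_plus_density a \<psi>) (\<lambda>t. f t + B) - integral\<^sup>L (dirac_plus_density a \<psi>) (\<lambda>_. B)"
    by simp
  also have "\<dots> = (a * (f 0 + B) + integral\<^sup>L lborel (\<lambda>t. \<psi> t * (f t + B)))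
      - (a * B + integral\<^sup>L lborel (\<lambda>t. \<psi> t * B))"
    using shifted B
    by (subst (1 2) integral_dirac_plus_density_nonneg[OF _ \<psi> a, where C="2 * B"]) auto
  also have "integral\<^sup>L lborel (\<lambda>t. \<psi> t * (f t + B)) = integral\<^sup>L lborel (\<lambda>t. \<psi> t * f t) + integral\<^sup>L lborel (\<lambda>t. \<psi> t * B)"
    unfolding distrib_left using \<psi> bounded B
    by (intro Bochner_Integration.integral_add integrable_mult_bounded[where B=B]) auto
  finally show ?thesis
    by (simp add: algebra_simps)
qed

section \<open>Unimodal Levy densities\<close>

lemma borel_measurable_unimodal:
  fixes k :: "real \<Rightarrow> real"
  assumes "mono_on {..<0} k" "antimono_on {0<..} k"
  shows "(\<lambda>t. indicator (- {0}) t * k t) \<in> borel_measurable borel"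
proof -
  have "mono_on {0<..} (\<lambda>t. - k t)"
    using assms(2) by (auto simp: monotone_on_def)
  then have "(\<lambda>t. - k t) \<in> borel_measurable (restrict_space borel {0<..})"
    by (rule borel_measurable_mono_on_fnc)
  then have "k \<in> borel_measurable (restrict_space borel {0<..})"
    using borel_measurable_uminus[of "\<lambda>t. - k t"] by simp
  then have "(\<lambda>t. if t \<in> {0<..} then k t else 0) \<in> borel_measurable borel"
    by (subst (asm) measurable_restrict_space_iff) auto
  moreover have "(\<lambda>t. if t \<in> {..<0} then k t else 0) \<in> borel_measurable borel"
    using borel_measurable_mono_on_fnc[OF assms(1)] by (subst (asm) measurable_restrict_space_iff) auto
  ultimately have "(\<lambda>t. (if t \<in> {..<0} then k t else 0) + (if t \<in> {0<..} then k t else 0)) \<in> borel_measurable borel"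
    by measurable
  also have "(\<lambda>t. (if t \<in> {..<0} then k t else 0) + (if t \<in> {0<..} then k t else 0))
      = (\<lambda>t. indicator (- {0}) t * k t)"
    by (auto simp: fun_eq_iff)
  finally show ?thesis .
qed

lemma countable_discontinuities_unimodal:
  fixes k :: "real \<Rightarrow> real"
  assumes "mono_on {..<0} k" "antimono_on {0<..} k"
  shows "countable {t. t \<noteq> 0 \<and> \<not> isCont k t}"
proof -
  have "mono_on {0<..} (\<lambda>t. - k t)"
    using assms(2) by (auto simp: monotone_on_def)
  then have "countable {t \<in> {0<..}. \<not> isCont (\<lambda>t. - k t) t}"
    by (intro mono_on_ctble_discont_open) auto
  moreover have "countable {t \<in> {..<0}. \<not> isCont k t}"
    using assms(1) by (intro mono_on_ctble_discont_open) auto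
  moreover have "isCont k t" if "isCont (\<lambda>t. - k t) t" for t
    using continuous_minus[OF that] by simp
  then have "{t. t \<noteq> 0 \<and> \<not> isCont k t}
      \<subseteq> {t \<in> {..<0}. \<not> isCont k t} \<union> {t \<in> {0<..}. \<not> isCont (\<lambda>t. - k t) t}"
    by (auto simp: neq_iff)
  ultimately show ?thesis
    by (meson countable_Un countable_subset)
qed

lemma levy_weight_le:
  fixes u k :: real
  assumes "u > 0" "0 \<le> k"
  shows "u * k / (1 + u\<^sup>2) \<le> k / u * min 1 (u\<^sup>2)"
proof (cases "u\<^sup>2 \<le> 1")
  case True
  have "u * k / (1 + u\<^sup>2) \<le> u * k / 1"
    using assms by (intro divide_left_mono) (auto intro: add_pos_nonneg)
  then show ?thesis
    using True assms by (simp add: power2_eq_square mult.commute)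
next
  case False
  have "u * k * u \<le> k * (1 + u\<^sup>2)"
    using assms by (simp add: power2_eq_square algebra_simps)
  then have "u * k / (1 + u\<^sup>2) \<le> k / u"
    using assms by (simp add: field_simps add_pos_nonneg)
  then show ?thesis
    using False by simp
qed

lemma integrable_levy_weight:
  fixes k :: "real \<Rightarrow> real"
  assumes nonneg: "\<And>t. t \<noteq> 0 \<Longrightarrow> 0 \<le> k t"
    and meas[measurable]: "(\<lambda>t. indicator (- {0}) t * k t) \<in> borel_measurable borel"
    and levy: "levy_measure (density lborel (\<lambda>t. ennreal (indicator (- {0}) t * k t / \<bar>t\<bar>)))"
  shows "integrable lborel (\<lambda>t. \<bar>t\<bar> * k t / (1 + t\<^sup>2))"
proof -
  \<comment> \<open>At \<open>t = 0\<close> the weight vanishes, so \<open>k\<close> may be replaced by its restriction to \<open>t \<noteq> 0\<close>.\<close>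
  have restrict: "\<bar>t\<bar> * k t / (1 + t\<^sup>2) = \<bar>t\<bar> * (indicator (- {0}) t * k t) / (1 + t\<^sup>2)" for t
    by (cases "t = 0") auto
  have "(\<integral>\<^sup>+t. ennreal (\<bar>t\<bar> * k t / (1 + t\<^sup>2)) \<partial>lborel)
      \<le> (\<integral>\<^sup>+t. ennreal (indicator (- {0}) t * k t / \<bar>t\<bar>) * ennreal (min 1 (t\<^sup>2)) \<partial>lborel)"
  proof (rule nn_integral_mono)
    fix t :: real
    show "ennreal (\<bar>t\<bar> * k t / (1 + t\<^sup>2)) \<le> ennreal (indicator (- {0}) t * k t / \<bar>t\<bar>) * ennreal (min 1 (t\<^sup>2))"
      using levy_weight_le[of "\<bar>t\<bar>" "k t"] nonneg[of t]
      by (cases "t = 0") (auto simp: ennreal_mult[symmetric] intro: ennreal_leI)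
  qed
  also have "\<dots> = (\<integral>\<^sup>+t. ennreal (min 1 (t\<^sup>2)) \<partial>density lborel (\<lambda>t. ennreal (indicator (- {0}) t * k t / \<bar>t\<bar>)))"
    by (rule nn_integral_density[symmetric]) auto
  also have "\<dots> < \<infinity>"
    using levy by (simp add: levy_measure_def)
  finally have "(\<integral>\<^sup>+t. ennreal (\<bar>t\<bar> * k t / (1 + t\<^sup>2)) \<partial>lborel) < \<infinity>" .
  moreover have "(\<lambda>t. \<bar>t\<bar> * k t / (1 + t\<^sup>2)) \<in> borel_measurable borel"
    unfolding restrict by measurable
  moreover have "0 \<le> \<bar>t\<bar> * k t / (1 + t\<^sup>2)" for t
    using nonneg[of t] by (cases "t = 0") (auto intro!: divide_nonneg_pos add_pos_nonneg)
  ultimately show ?thesis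
    by (intro integrableI_nonneg) auto
qed

section \<open>Weak convergence\<close>

lemma approximate_identity_tendsto:
  fixes b :: "nat \<Rightarrow> real \<Rightarrow> real" and r :: "nat \<Rightarrow> real" and f :: "real \<Rightarrow> real"
  assumes b_meas[measurable]: "\<And>n. b n \<in> borel_measurable borel" and b_nonneg: "\<And>n t. 0 \<le> b n t"
    and b_int: "\<And>n. integrable lborel (b n)" and b_pos: "\<And>n. 0 < integral\<^sup>L lborel (b n)"
    and b_supp: "\<And>n t. r n \<le> \<bar>t\<bar> \<Longrightarrow> b n t = 0" and r: "r \<longlonglongrightarrow> 0"
    and f_meas[measurable]: "f \<in> borel_measurable borel" and f_bounded: "\<And>t. \<bar>f t\<bar> \<le> B"
    and f_cont: "isCont f 0"
  shows "(\<lambda>n. integral\<^sup>L lborel (\<lambda>t. b n t * f t) / integral\<^sup>L lborel (b n)) \<longlonglongrightarrow> f 0"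
proof (rule LIMSEQ_I)
  fix \<epsilon> :: real
  assume "0 < \<epsilon>"
  then obtain \<delta> where \<delta>: "\<delta> > 0" "\<And>t. \<bar>t\<bar> < \<delta> \<Longrightarrow> \<bar>f t - f 0\<bar> < \<epsilon> / 2"
    using f_cont unfolding continuous_at_eps_delta by (metis dist_real_def diff_0_right half_gt_zero)
  obtain N where N: "\<And>n. n \<ge> N \<Longrightarrow> r n < \<delta>"
    using order_tendstoD(2)[OF r \<delta>(1)] by (auto simp: eventually_sequentially)
  have "norm (integral\<^sup>L lborel (\<lambda>t. b n t * f t) / integral\<^sup>L lborel (b n) - f 0) < \<epsilon>" if "n \<ge> N" for n
  proof -
    \<comment> \<open>On the support of \<open>b n\<close> the function \<open>f\<close> is \<open>\<epsilon>/2\<close>-close to \<open>f 0\<close>.\<close>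
    have close: "\<bar>b n t * (f t - f 0)\<bar> \<le> \<epsilon> / 2 * b n t" for t
    proof (cases "\<bar>t\<bar> < r n")
      case True
      then have "\<bar>f t - f 0\<bar> \<le> \<epsilon> / 2"
        using N[OF that] \<delta>(2)[of t] by simp
      then have "b n t * \<bar>f t - f 0\<bar> \<le> b n t * (\<epsilon> / 2)"
        using b_nonneg[of n t] by (rule mult_left_mono)
      then show ?thesis
        using b_nonneg[of n t] by (simp add: abs_mult mult.commute)
    next
      case False
      then show ?thesis
        using b_supp[of n t] b_nonneg[of n t] by simp
    qed
    have int_f: "integrable lborel (\<lambda>t. b n t * f t)"
      by (rule integrable_mult_bounded[OF b_int _ f_bounded]) simp
    have int_diff: "integrable lborel (\<lambda>t. b n t * (f t - f 0))"
    proof (rule integrable_mult_bounded[OF b_int, where B="2 * B"])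
      show "\<bar>f t - f 0\<bar> \<le> 2 * B" for t
        using f_bounded[of t] f_bounded[of 0] by linarith
    qed simp
    have "integral\<^sup>L lborel (\<lambda>t. b n t * f t) - f 0 * integral\<^sup>L lborel (b n)
        = integral\<^sup>L lborel (\<lambda>t. b n t * (f t - f 0))"
      using int_f b_int by (simp add: right_diff_distrib mult.commute)
    also have "\<bar>\<dots>\<bar> \<le> integral\<^sup>L lborel (\<lambda>t. \<epsilon> / 2 * b n t)"
      using int_diff b_int close by (intro integral_abs_bound_integral) auto
    also have "\<dots> = \<epsilon> / 2 * integral\<^sup>L lborel (b n)"
      by simp
    finally have "\<bar>integral\<^sup>L lborel (\<lambda>t. b n t * f t) / integral\<^sup>L lborel (b n) - f 0\<bar> \<le> \<epsilon> / 2"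
      using b_pos[of n] by (simp add: divide_le_eq abs_divide field_simps)
    then show ?thesis
      using \<open>0 < \<epsilon>\<close> by simp
  qed
  then show "\<exists>N. \<forall>n\<ge>N. norm (integral\<^sup>L lborel (\<lambda>t. b n t * f t) / integral\<^sup>L lborel (b n) - f 0) < \<epsilon>"
    by blast
qed

lemma finite_measure_density_integrable:
  assumes "integrable M f" "\<And>x. 0 \<le> f x"
  shows "finite_measure (density M (\<lambda>x. ennreal (f x)))"
proof (rule finite_measureI)
  have "emeasure (density M (\<lambda>x. ennreal (f x))) (space M) = ennreal (integral\<^sup>L M f)"
    using assms by (simp add: emeasure_density nn_integral_eq_integral)
  then show "emeasure (density M (\<lambda>x. ennreal (f x))) (space (density M (\<lambda>x. ennreal (f x)))) \<noteq> \<infinity>"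
    by simp
qed

lemma tendsto_integral_dominated_mult:
  fixes q :: "nat \<Rightarrow> real \<Rightarrow> real"
  assumes \<psi>_int: "integrable lborel \<psi>"
    and q_meas[measurable]: "\<And>n. q n \<in> borel_measurable borel" and q_nonneg: "\<And>n t. 0 \<le> q n t"
    and q_le: "\<And>n t. q n t \<le> \<psi> t" and q_lim: "AE t in lborel. (\<lambda>n. q n t) \<longlonglongrightarrow> \<psi> t"
    and f_meas[measurable]: "f \<in> borel_measurable borel" and f_bounded: "\<And>t. \<bar>f t\<bar> \<le> B"
  shows "(\<lambda>n. integral\<^sup>L lborel (\<lambda>t. q n t * f t)) \<longlonglongrightarrow> integral\<^sup>L lborel (\<lambda>t. \<psi> t * f t)"
proof (rule integral_dominated_convergence[where w="\<lambda>t. B * \<psi> t"])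
  show "integrable lborel (\<lambda>t. B * \<psi> t)"
    using \<psi>_int by simp
  show "AE t in lborel. (\<lambda>n. q n t * f t) \<longlonglongrightarrow> \<psi> t * f t"
    using q_lim by eventually_elim (auto intro: tendsto_mult_right)
  show "AE t in lborel. norm (q n t * f t) \<le> B * \<psi> t" for n
  proof (intro AE_I2)
    fix t
    have "q n t * \<bar>f t\<bar> \<le> \<psi> t * B"
      using q_nonneg[of n t] q_le[of n t] f_bounded[of t] by (intro mult_mono) auto
    then show "norm (q n t * f t) \<le> B * \<psi> t"
      using q_nonneg[of n t] by (simp add: abs_mult mult.commute)
  qed
qed (use borel_measurable_integrable[OF \<psi>_int] in simp_all)

lemma weak_conv_finite_dirac_plus_density:
  fixes q b :: "nat \<Rightarrow> real \<Rightarrow> real" and r e :: "nat \<Rightarrow> real" and \<psi> \<rho> :: "real \<Rightarrow> real"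
  assumes \<psi>_meas[measurable]: "\<psi> \<in> borel_measurable borel" and \<psi>_nonneg: "\<And>t. 0 \<le> \<psi> t"
    and \<psi>_int: "integrable lborel \<psi>"
    and q_meas[measurable]: "\<And>n. q n \<in> borel_measurable borel" and q_nonneg: "\<And>n t. 0 \<le> q n t"
    and q_le: "\<And>n t. q n t \<le> \<psi> t" and q_lim: "AE t in lborel. (\<lambda>n. q n t) \<longlonglongrightarrow> \<psi> t"
    and b_meas[measurable]: "\<And>n. b n \<in> borel_measurable borel" and b_nonneg: "\<And>n t. 0 \<le> b n t"
    and b_int: "\<And>n. integrable lborel (b n)" and b_pos: "\<And>n. 0 < integral\<^sup>L lborel (b n)"
    and b_supp: "\<And>n t. r n \<le> \<bar>t\<bar> \<Longrightarrow> b n t = 0" and r: "r \<longlonglongrightarrow> 0"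
    and \<rho>_meas[measurable]: "\<rho> \<in> borel_measurable borel" and \<rho>_nonneg: "\<And>t. 0 \<le> \<rho> t"
    and \<rho>_int: "integrable lborel \<rho>"
    and e: "e \<longlonglongrightarrow> 0" "\<And>n. 0 \<le> e n" and a: "0 \<le> a"
  shows "weak_conv_finite
     (\<lambda>n. density lborel (\<lambda>t. ennreal (q n t + a / integral\<^sup>L lborel (b n) * b n t + e n * \<rho> t)))
     (dirac_plus_density a \<psi>)"
proof -
  define c where "c n = a / integral\<^sup>L lborel (b n)" for n
  define H where "H n t = q n t + c n * b n t + e n * \<rho> t" for n t
  have c_nonneg: "0 \<le> c n" for n
    using a b_pos[of n] by (simp add: c_def)
  have H_nonneg: "0 \<le> H n t" for n t
    using q_nonneg[of n t] b_nonneg[of n t] \<rho>_nonneg[of t] c_nonneg[of n] e(2)[of n]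
    by (simp add: H_def)
  have H_meas[measurable]: "H n \<in> borel_measurable borel" for n
    unfolding H_def[abs_def] by measurable
  have q_int: "integrable lborel (q n)" for n
  proof (rule Bochner_Integration.integrable_bound[OF \<psi>_int])
    show "AE t in lborel. norm (q n t) \<le> norm (\<psi> t)"
      using q_nonneg[of n] q_le[of n] \<psi>_nonneg by (intro AE_I2) (simp add: abs_of_nonneg)
  qed simp
  have H_int: "integrable lborel (H n)" for n
    unfolding H_def[abs_def] using q_int b_int \<rho>_int
    by (intro Bochner_Integration.integrable_add integrable_mult_right)
  have "weak_conv_finite (\<lambda>n. density lborel (\<lambda>t. ennreal (H n t))) (dirac_plus_density a \<psi>)"
    unfolding weak_conv_finite_def
  proof (intro conjI allI impI)
    show "finite_measure (density lborel (\<lambda>t. ennreal (H n t)))" for n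
      using H_int H_nonneg by (rule finite_measure_density_integrable)
    show "finite_measure (dirac_plus_density a \<psi>)"
      using \<psi>_nonneg \<psi>_int by (rule finite_measure_dirac_plus_density[OF \<psi>_meas])
  next
    fix f :: "real \<Rightarrow> real"
    assume "continuous_on UNIV f \<and> bounded (range f)"
    then obtain B where f_cont: "continuous_on UNIV f" and f_bounded: "\<And>t. \<bar>f t\<bar> \<le> B"
      by (auto simp: bounded_real)
    have f_meas[measurable]: "f \<in> borel_measurable borel"
      using f_cont by (rule borel_measurable_continuous_onI)
    have int: "integrable lborel (\<lambda>t. q n t * f t)" "integrable lborel (\<lambda>t. b n t * f t)"
      "integrable lborel (\<lambda>t. \<rho> t * f t)" for n
      using f_bounded by (auto intro!: integrable_mult_bounded q_int b_int \<rho>_int)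
    have "(\<lambda>n. integral\<^sup>L lborel (\<lambda>t. b n t * f t) / integral\<^sup>L lborel (b n)) \<longlonglongrightarrow> f 0"
      by (rule approximate_identity_tendsto[where r=r and B=B])
        (use b_nonneg b_int b_pos b_supp r f_bounded f_cont in \<open>auto simp: continuous_on_eq_continuous_at\<close>)
    from tendsto_mult_left[OF this, of a]
    have lim_b: "(\<lambda>n. c n * integral\<^sup>L lborel (\<lambda>t. b n t * f t)) \<longlonglongrightarrow> a * f 0"
      by (simp add: c_def)
    have "(\<lambda>t. H n t * f t) = (\<lambda>t. q n t * f t + c n * (b n t * f t) + e n * (\<rho> t * f t))" for n
      by (simp add: H_def fun_eq_iff algebra_simps)
    then have "(\<lambda>n. integral\<^sup>L (density lborel (\<lambda>t. ennreal (H n t))) f)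
        = (\<lambda>n. integral\<^sup>L lborel (\<lambda>t. q n t * f t) + c n * integral\<^sup>L lborel (\<lambda>t. b n t * f t)
            + e n * integral\<^sup>L lborel (\<lambda>t. \<rho> t * f t))"
      using H_nonneg int by (simp add: integral_density Bochner_Integration.integrable_add)
    also have "\<dots> \<longlonglongrightarrow> integral\<^sup>L lborel (\<lambda>t. \<psi> t * f t) + a * f 0 + 0 * integral\<^sup>L lborel (\<lambda>t. \<rho> t * f t)"
      by (intro tendsto_add lim_b tendsto_mult_right_zero e(1) tendsto_mult tendsto_const
          tendsto_integral_dominated_mult[OF \<psi>_int q_meas q_nonneg q_le q_lim f_meas f_bounded])
    also have "integral\<^sup>L lborel (\<lambda>t. \<psi> t * f t) + a * f 0 + 0 * integral\<^sup>L lborel (\<lambda>t. \<rho> t * f t)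
        = integral\<^sup>L (dirac_plus_density a \<psi>) f"
      using integral_dirac_plus_density[OF \<psi>_meas \<psi>_nonneg \<psi>_int a f_meas f_bounded] by simp
    finally show "(\<lambda>n. integral\<^sup>L (density lborel (\<lambda>t. ennreal (H n t))) f)
        \<longlonglongrightarrow> integral\<^sup>L (dirac_plus_density a \<psi>) f" .
  qed simp_all
  then show ?thesis
    by (simp add: H_def c_def)
qed

section \<open>The approximating kernels\<close>

lemma abs_div_one_plus_square_le_1: "\<bar>t\<bar> / (1 + t\<^sup>2) \<le> (1 :: real)"
  using abs_le_one_plus_square[of t] by (simp add: divide_le_eq add_pos_nonneg)

lemma bump_weight:
  defines "b n t \<equiv> \<bar>t\<bar> / (1 + t\<^sup>2) * bump_profile n \<bar>t\<bar>"
  shows "b n \<in> borel_measurable borel" "0 \<le> b n t" "1 / (real n + 1) \<le> \<bar>t\<bar> \<Longrightarrow> b n t = 0"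
    "integrable lborel (b n)" "0 < integral\<^sup>L lborel (b n)"
proof -
  have [measurable]: "bump_profile n \<in> borel_measurable borel"
    by (rule borel_measurable_continuous_onI[OF continuous_on_bump_profile])
  show meas: "b n \<in> borel_measurable borel"
    unfolding b_def by measurable
  show nonneg: "0 \<le> b n t" for t
    unfolding b_def using bump_profile_nonneg by (simp add: add_pos_nonneg)
  show "b n t = 0" if "1 / (real n + 1) \<le> \<bar>t\<bar>"
    unfolding b_def using bump_profile_eq_0[OF that] by simp
  have le_indicator: "b n t \<le> indicator {-1..1} t" for t
  proof (cases "\<bar>t\<bar> \<le> 1")
    case True
    have "b n t \<le> 1 * 1"
      unfolding b_def using abs_div_one_plus_square_le_1[of t] bump_profile_nonneg[of n "\<bar>t\<bar>"]
        bump_profile_le_1[of n "\<bar>t\<bar>"] by (intro mult_mono) auto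
    then show ?thesis
      using True by (simp add: abs_le_iff)
  next
    case False
    moreover have "1 / (real n + 1) \<le> 1"
      by (simp add: divide_le_eq)
    ultimately have "1 / (real n + 1) \<le> \<bar>t\<bar>"
      by linarith
    then show ?thesis
      unfolding b_def using False bump_profile_eq_0 by simp
  qed
  show int: "integrable lborel (b n)"
    by (rule Bochner_Integration.integrable_bound[OF integrable_real_indicator[of "{-1..1}"]])
      (use meas nonneg le_indicator in \<open>auto simp: emeasure_lborel_Icc\<close>)
  \<comment> \<open>On \<open>[e, 3e/2]\<close> with \<open>e = 1/(8(n+1))\<close> the bump equals 1 and the weight is at least \<open>e/2\<close>.\<close>
  define e where "e = 1 / (8 * (real n + 1))"
  have e: "0 < e" "e \<le> 1 / 8"
    by (auto simp: e_def divide_le_eq)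
  have lower: "e / 2 * indicator {e..3 * e / 2} t \<le> b n t" for t
  proof (cases "t \<in> {e..3 * e / 2}")
    case True
    then have t: "e \<le> t" "t \<le> 3 * e / 2"
      by auto
    have "t < 1 / (4 * (real n + 1))"
      using t e by (simp add: e_def field_simps)
    then have "bump_profile n \<bar>t\<bar> = 1"
      using t e by (intro bump_profile_eq_1) auto
    moreover have "t / 2 \<le> t / (1 + t\<^sup>2)"
      using t e by (intro divide_left_mono) (auto simp: abs_square_le_1 add_pos_nonneg)
    ultimately show ?thesis
      using True t e by (simp add: b_def)
  next
    case False
    then show ?thesis
      using nonneg[of t] by simp
  qed
  have "0 < e / 2 * (e / 2)"
    using e by simp
  also have "e / 2 * (e / 2) = integral\<^sup>L lborel (\<lambda>t. e / 2 * indicator {e..3 * e / 2} t :: real)"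
    using e by (simp add: measure_lborel_Icc)
  also have "\<dots> \<le> integral\<^sup>L lborel (b n)"
    using e lower int by (intro integral_mono integrable_mult_right integrable_real_indicator) (auto simp: emeasure_lborel_Icc)
  finally show "0 < integral\<^sup>L lborel (b n)" .
qed

definition kernel_profile :: "(real \<Rightarrow> real) \<Rightarrow> real \<Rightarrow> nat \<Rightarrow> real \<Rightarrow> real" where
  "kernel_profile \<phi> c n s =
     approx_profile \<phi> n s + c * bump_profile n s + 1 / (real n + 1) * (1 / (1 + s\<^sup>2) ^ 3)"

lemma kernel_profile_properties:
  assumes anti: "antimono_on {0<..} \<phi>" and nonneg: "\<And>s. s > 0 \<Longrightarrow> 0 \<le> \<phi> s" and c: "0 \<le> c"
  shows "C2_rapid_decay_pos (kernel_profile \<phi> c n)" "antimono_on {0<..} (kernel_profile \<phi> c n)"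
    "s > 0 \<Longrightarrow> 0 < kernel_profile \<phi> c n s"
proof -
  show "C2_rapid_decay_pos (kernel_profile \<phi> c n)"
    unfolding kernel_profile_def[abs_def]
    by (intro C2_rapid_decay_pos_add C2_rapid_decay_pos_cmult C2_rapid_decay_pos_approx_profile[OF anti nonneg]
        C2_rapid_decay_pos_bump_profile C2_rapid_decay_pos_inverse_cube)
  have inverse_cube_le: "1 / (1 + y\<^sup>2) ^ 3 \<le> 1 / (1 + x\<^sup>2) ^ 3" if "0 < x" "x \<le> y" for x y :: real
    using that by (intro divide_left_mono power_mono add_left_mono) (auto intro!: mult_pos_pos add_pos_nonneg)
  show "antimono_on {0<..} (kernel_profile \<phi> c n)"
  proof (rule monotone_onI)
    fix x y :: real
    assume "x \<in> {0<..}" "y \<in> {0<..}" "x \<le> y"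
    then show "kernel_profile \<phi> c n y \<le> kernel_profile \<phi> c n x"
      unfolding kernel_profile_def
      using antimonoD[OF antimono_approx_profile[OF anti nonneg]] antimonoD[OF antimono_bump_profile]
        inverse_cube_le[of x y] c
      by (intro add_mono mult_left_mono) auto
  qed
  show "0 < kernel_profile \<phi> c n s" if "s > 0"
    unfolding kernel_profile_def
    using approx_profile_nonneg[OF anti nonneg] bump_profile_nonneg c
    by (intro add_nonneg_pos add_nonneg_nonneg mult_nonneg_nonneg mult_pos_pos) (auto intro: add_pos_nonneg)
qed

lemma two_sided_kernel:
  assumes "C2_rapid_decay_pos F" "C2_rapid_decay_pos G" "antimono_on {0<..} F" "antimono_on {0<..} G"
    "\<And>s. s > 0 \<Longrightarrow> 0 < F s" "\<And>s. s > 0 \<Longrightarrow> 0 < G s"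
  shows "(\<forall>t. t \<noteq> 0 \<longrightarrow> 0 \<le> two_sided F G t) \<and> smooth_decay (two_sided F G) \<and>
    mono_on {..<0} (two_sided F G) \<and> antimono_on {0<..} (two_sided F G) \<and>
    (\<forall>t. t \<noteq> 0 \<longrightarrow> 0 < two_sided F G t)"
proof (intro conjI allI impI)
  show pos: "0 < two_sided F G t" if "t \<noteq> 0" for t
    using assms(5)[of t] assms(6)[of "- t"] that by (auto simp: two_sided_def)
  show "0 \<le> two_sided F G t" if "t \<noteq> 0" for t
    using pos[OF that] by simp
  show "smooth_decay (two_sided F G)"
    using assms(1,2) by (rule smooth_decay_two_sided)
  show "mono_on {..<0} (two_sided F G)"
    using monotone_onD[OF assms(4)] by (intro monotone_onI) (auto simp: two_sided_def)
  show "antimono_on {0<..} (two_sided F G)"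
    using monotone_onD[OF assms(3)] by (intro monotone_onI) (auto simp: two_sided_def)
qed

lemma two_sided_approx_profile:
  fixes k :: "real \<Rightarrow> real"
  assumes nonneg: "\<And>t. t \<noteq> 0 \<Longrightarrow> 0 \<le> k t" and inc: "mono_on {..<0} k" and dec: "antimono_on {0<..} k"
  defines "p n \<equiv> two_sided (approx_profile k n) (approx_profile (\<lambda>s. k (- s)) n)"
  shows "p n \<in> borel_measurable borel" "0 \<le> p n t" "t \<noteq> 0 \<Longrightarrow> p n t \<le> k t"
    "AE t in lborel. (\<lambda>n. p n t) \<longlonglongrightarrow> k t"
proof -
  have dec': "antimono_on {0<..} (\<lambda>s. k (- s))"
    using inc by (auto simp: monotone_on_def)
  have nonneg': "\<And>s. s > 0 \<Longrightarrow> 0 \<le> k (- s)"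
    using nonneg by simp
  have [measurable]: "approx_profile k n \<in> borel_measurable borel"
    "approx_profile (\<lambda>s. k (- s)) n \<in> borel_measurable borel"
    using continuous_on_approx_profile[OF dec] continuous_on_approx_profile[OF dec' nonneg'] nonneg
    by (auto intro: borel_measurable_continuous_onI)
  show "p n \<in> borel_measurable borel"
    unfolding p_def two_sided_def[abs_def] by measurable
  show "0 \<le> p n t"
    using approx_profile_nonneg[OF dec] approx_profile_nonneg[OF dec' nonneg'] nonneg
    by (simp add: p_def two_sided_def)
  show "p n t \<le> k t" if "t \<noteq> 0"
    using approx_profile_le[OF dec, of t n] approx_profile_le[OF dec' nonneg', of "- t" n] nonneg that
    by (auto simp: p_def two_sided_def)
  have "countable (insert 0 {t. t \<noteq> 0 \<and> \<not> isCont k t})"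
    using countable_discontinuities_unimodal[OF inc dec] by simp
  then have "AE t in lborel. t \<notin> insert 0 {t. t \<noteq> 0 \<and> \<not> isCont k t}"
    by (intro AE_not_in countable_imp_null_set_lborel)
  then show "AE t in lborel. (\<lambda>n. p n t) \<longlonglongrightarrow> k t"
  proof eventually_elim
    case (elim t)
    show ?case
    proof (cases "t > 0")
      case True
      then show ?thesis
        using approx_profile_tendsto[OF dec _ True] elim nonneg by (simp add: p_def two_sided_def)
    next
      case False
      then have "- t > 0"
        using elim by simp
      have "isCont (\<lambda>s. k (- s)) (- t)"
        by (rule isCont_o2[where f=uminus]) (use elim in auto)
      note approx_profile_tendsto[OF dec' nonneg' \<open>- t > 0\<close> this]
      then show ?thesis
        using False by (simp add: p_def two_sided_def)
    qed
  qed
qed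

lemma integrable_weight_inverse_cube:
  "integrable lborel (\<lambda>t::real. \<bar>t\<bar> / (1 + t\<^sup>2) * (1 / (1 + t\<^sup>2) ^ 3))"
proof (rule Bochner_Integration.integrable_bound)
  show "integrable lborel (\<lambda>t::real. inverse (1 + t\<^sup>2))"
    using integrable_inverse_1_plus_square by (simp add: set_integrable_def)
  have "\<bar>t\<bar> / (1 + t\<^sup>2) * (1 / (1 + t\<^sup>2) ^ 3) \<le> 1 * inverse (1 + t\<^sup>2)" for t :: real
  proof (intro mult_mono)
    have "1 + t\<^sup>2 \<le> (1 + t\<^sup>2) ^ 3"
      by (rule self_le_power) auto
    then show "1 / (1 + t\<^sup>2) ^ 3 \<le> inverse (1 + t\<^sup>2)"
      by (simp add: inverse_eq_divide divide_left_mono add_pos_nonneg)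
  qed (auto simp: abs_div_one_plus_square_le_1)
  then show "AE t in lborel. norm (\<bar>t\<bar> / (1 + t\<^sup>2) * (1 / (1 + t\<^sup>2) ^ 3)) \<le> norm (inverse (1 + (t :: real)\<^sup>2))"
    by (intro AE_I2) (simp add: add_pos_nonneg)
qed simp

lemma weak_conv_levy_parts:
  fixes k :: "real \<Rightarrow> real"
  assumes k_nonneg: "\<And>t. t \<noteq> 0 \<Longrightarrow> 0 \<le> k t" and k_inc: "mono_on {..<0} k"
    and k_dec: "antimono_on {0<..} k"
    and k_levy: "levy_measure (density lborel (\<lambda>t. ennreal (indicator (- {0}) t * k t / \<bar>t\<bar>)))"
    and a: "0 \<le> a"
  defines "w t \<equiv> \<bar>t\<bar> / (1 + t\<^sup>2)"
    and "p n \<equiv> two_sided (approx_profile k n) (approx_profile (\<lambda>s. k (- s)) n)"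
    and "\<beta> n t \<equiv> \<bar>t\<bar> / (1 + t\<^sup>2) * bump_profile n \<bar>t\<bar>"
  shows "weak_conv_finite
      (\<lambda>n. density lborel (\<lambda>t. ennreal (w t * p n t + a / integral\<^sup>L lborel (\<beta> n) * \<beta> n t
          + 1 / (real n + 1) * (w t * (1 / (1 + t\<^sup>2) ^ 3)))))
      (limit_measure a k)"
proof -
  have p: "p n \<in> borel_measurable borel" "0 \<le> p n t" "t \<noteq> 0 \<Longrightarrow> p n t \<le> k t"
    "AE t in lborel. (\<lambda>n. p n t) \<longlonglongrightarrow> k t" for n t
    unfolding p_def by (intro two_sided_approx_profile k_inc k_dec; simp add: k_nonneg)+
  have \<psi>_int: "integrable lborel (\<lambda>t. \<bar>t\<bar> * k t / (1 + t\<^sup>2))"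
    using k_nonneg borel_measurable_unimodal[OF k_inc k_dec] k_levy by (rule integrable_levy_weight)
  have \<psi>_meas: "(\<lambda>t. \<bar>t\<bar> * k t / (1 + t\<^sup>2)) \<in> borel_measurable borel"
    using borel_measurable_integrable[OF \<psi>_int] by simp
  have \<psi>_nonneg: "0 \<le> \<bar>t\<bar> * k t / (1 + t\<^sup>2)" for t
    using k_nonneg[of t] by (cases "t = 0") (auto intro!: divide_nonneg_pos add_pos_nonneg)
  have w_nonneg: "0 \<le> w t" for t
    by (simp add: w_def add_pos_nonneg)
  have [measurable]: "w \<in> borel_measurable borel"
    unfolding w_def[abs_def] by measurable
  have q_le: "w t * p n t \<le> \<bar>t\<bar> * k t / (1 + t\<^sup>2)" for n t
  proof (cases "t = 0")
    case False
    have "w t * p n t \<le> w t * k t"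
      using p(3)[of t n] False w_nonneg[of t] by (simp add: mult_left_mono)
    then show ?thesis
      by (simp add: w_def)
  qed (simp add: w_def)
  have q_lim: "AE t in lborel. (\<lambda>n. w t * p n t) \<longlonglongrightarrow> \<bar>t\<bar> * k t / (1 + t\<^sup>2)"
    using p(4)
  proof eventually_elim
    case (elim t)
    then have "(\<lambda>n. w t * p n t) \<longlonglongrightarrow> w t * k t"
      by (rule tendsto_mult_left)
    then show ?case
      by (simp add: w_def)
  qed
  have e: "(\<lambda>n. 1 / (real n + 1)) \<longlonglongrightarrow> 0"
    using LIMSEQ_inverse_real_of_nat by (simp add: inverse_eq_divide add.commute)
  have "limit_measure a k = dirac_plus_density a (\<lambda>t. \<bar>t\<bar> * k t / (1 + t\<^sup>2))"
    by (simp add: limit_measure_def dirac_plus_density_def)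
  then show ?thesis
    using bump_weight[folded \<beta>_def] integrable_weight_inverse_cube[folded w_def] p(1,2) w_nonneg a
    by (simp only:)
      (rule weak_conv_finite_dirac_plus_density[OF \<psi>_meas \<psi>_nonneg \<psi>_int _ _ q_le q_lim _ _ _ _ _ e _ _ _ e];
        auto)
qed

lemma two_sided_kernel_profile_eq:
  "two_sided (kernel_profile \<phi> c n) (kernel_profile (\<lambda>s. \<phi> (- s)) c n) t
    = two_sided (approx_profile \<phi> n) (approx_profile (\<lambda>s. \<phi> (- s)) n) t
      + c * bump_profile n \<bar>t\<bar> + 1 / (real n + 1) * (1 / (1 + t\<^sup>2) ^ 3)"
  by (simp add: two_sided_def kernel_profile_def)

lemma weak_conv_levy_kernel:
  fixes k :: "real \<Rightarrow> real"
  assumes k_nonneg: "\<And>t. t \<noteq> 0 \<Longrightarrow> 0 \<le> k t" and k_inc: "mono_on {..<0} k"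
    and k_dec: "antimono_on {0<..} k"
    and k_levy: "levy_measure (density lborel (\<lambda>t. ennreal (indicator (- {0}) t * k t / \<bar>t\<bar>)))"
    and a: "0 \<le> a"
  defines "c n \<equiv> a / integral\<^sup>L lborel (\<lambda>t. \<bar>t\<bar> / (1 + t\<^sup>2) * bump_profile n \<bar>t\<bar>)"
  shows "weak_conv_finite
      (\<lambda>n. density lborel (\<lambda>t. ennreal (\<bar>t\<bar>
        * two_sided (kernel_profile k (c n) n) (kernel_profile (\<lambda>s. k (- s)) (c n) n) t / (1 + t\<^sup>2))))
      (limit_measure a k)"
proof -
  have split: "u * (P + C * B + E * G) / D = u / D * P + C * (u / D * B) + E * (u / D * G)"
    for u P C B E G D :: real
    unfolding divide_inverse by algebra
  show ?thesis
    unfolding two_sided_kernel_profile_eq c_def split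
    by (intro weak_conv_levy_parts k_inc k_dec k_levy a) (simp add: k_nonneg)
qed

theorem lemma4p1:
  fixes k :: "real \<Rightarrow> real" and a :: real
  assumes k_nonneg: "\<And>t. t \<noteq> 0 \<Longrightarrow> 0 \<le> k t"
    and k_inc: "mono_on {..<0} k"
    and k_dec: "antimono_on {0<..} k"
    and k_levy: "levy_measure (density lborel (\<lambda>t. ennreal (indicator (- {0}) t * k t / \<bar>t\<bar>)))"
    and a_nonneg: "0 \<le> a"
  shows "\<exists>kn :: nat \<Rightarrow> real \<Rightarrow> real.
           (\<forall>n. (\<forall>t. t \<noteq> 0 \<longrightarrow> 0 \<le> kn n t) \<and>
                smooth_decay (kn n) \<and>
                mono_on {..<0} (kn n) \<and> antimono_on {0<..} (kn n) \<and>
                (\<forall>t. t \<noteq> 0 \<longrightarrow> 0 < kn n t)) \<and>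
           weak_conv_finite
             (\<lambda>n. density lborel (\<lambda>t. ennreal (\<bar>t\<bar> * kn n t / (1 + t\<^sup>2))))
             (limit_measure a k)"
proof -
  define c where "c n = a / integral\<^sup>L lborel (\<lambda>t. \<bar>t\<bar> / (1 + t\<^sup>2) * bump_profile n \<bar>t\<bar>)" for n
  define kn where "kn n = two_sided (kernel_profile k (c n) n) (kernel_profile (\<lambda>s. k (- s)) (c n) n)"
    for n
  have c_nonneg: "0 \<le> c n" for n
    unfolding c_def using a_nonneg bump_weight(5) by (simp add: less_imp_le)
  have k_reflected: "antimono_on {0<..} (\<lambda>s. k (- s))" "\<And>s. s > 0 \<Longrightarrow> 0 \<le> k (- s)"
    using k_inc k_nonneg by (auto simp: monotone_on_def)
  have "(\<forall>t. t \<noteq> 0 \<longrightarrow> 0 \<le> kn n t) \<and> smooth_decay (kn n) \<and> mono_on {..<0} (kn n) \<and>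
      antimono_on {0<..} (kn n) \<and> (\<forall>t. t \<noteq> 0 \<longrightarrow> 0 < kn n t)" for n
    unfolding kn_def using k_nonneg
    by (intro two_sided_kernel kernel_profile_properties[OF k_dec _ c_nonneg]
        kernel_profile_properties[OF k_reflected c_nonneg])
      auto
  moreover have "weak_conv_finite (\<lambda>n. density lborel (\<lambda>t. ennreal (\<bar>t\<bar> * kn n t / (1 + t\<^sup>2))))
      (limit_measure a k)"
    unfolding kn_def c_def using k_nonneg k_inc k_dec k_levy a_nonneg by (rule weak_conv_levy_kernel)
  ultimately show ?thesis
    by blast
qed

end
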